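(* Let $\mathscr{H}$ be a complex Hilbert space and $\mathcal{A}\subseteq\mathcal{B}(\mathscr{H})$ a von Neumann algebra. Then $\mathrm{Col}(\mathcal{A})=\mathrm{Col}(\mathcal{A}')$.
   Context: A von Neumann algebra is a self-adjoint, strong-operator-topology closed subalgebra of $\mathcal{B}(\mathscr{H})$ containing the identity; $\mathcal{A}'$ is its commutant. For a set $\mathcal{S}$ of operators, $\mathrm{Lat}(\mathcal{S})$ is the set of closed subspaces invariant for all operators in $\mathcal{S}$, and $\mathrm{Col}(\mathcal{S})$ is the group of invertible $S\in\mathcal{B}(\mathscr{H})$ such that for every closed subspace $\mathscr{M}$: $\mathscr{M}\in\mathrm{Lat}(\mathcal{S})$ iff $S\mathscr{M}\in\mathrm{Lat}(\mathcal{S})$. *)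

theory Defs
  imports "HOL-Analysis.Analysis"
begin

text \<open>Inner product is linear in the
  second argument and conjugate-linear in the first.\<close>

class complex_vector = real_vector +
  fixes scaleC :: "complex \<Rightarrow> 'a \<Rightarrow> 'a" (infixr \<open>*\<^sub>C\<close> 75)
  assumes scaleC_add_right: "a *\<^sub>C (x + y) = a *\<^sub>C x + a *\<^sub>C y"
    and scaleC_add_left: "(a + b) *\<^sub>C x = a *\<^sub>C x + b *\<^sub>C x"
    and scaleC_scaleC: "a *\<^sub>C (b *\<^sub>C x) = (a * b) *\<^sub>C x"
    and scaleC_one: "1 *\<^sub>C x = x"
    and scaleR_scaleC: "scaleR r = scaleC (complex_of_real r)"

class complex_normed_vector = complex_vector + real_normed_vector +
  assumes norm_scaleC: "norm (a *\<^sub>C x) = cmod a * norm x"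

class complex_inner = complex_normed_vector +
  fixes cinner :: "'a \<Rightarrow> 'a \<Rightarrow> complex"
  assumes cinner_conj_commute: "cinner x y = cnj (cinner y x)"
    and cinner_add_right: "cinner x (y + z) = cinner x y + cinner x z"
    and cinner_scaleC_right: "cinner x (a *\<^sub>C y) = a * cinner x y"
    and cinner_self_real: "Im (cinner x x) = 0"
    and cinner_self_nonneg: "Re (cinner x x) \<ge> 0"
    and cinner_self_eq_zero: "cinner x x = 0 \<longleftrightarrow> x = 0"
    and norm_eq_sqrt_cinner: "norm x = sqrt (Re (cinner x x))"

class chilbert_space = complex_inner + complete_space

definition bounded_clinear :: "('a::complex_normed_vector \<Rightarrow> 'b::complex_normed_vector) \<Rightarrow> bool" where
  "bounded_clinear T \<longleftrightarrow>
     (\<forall>x y. T (x + y) = T x + T y) \<and> (\<forall>c x. T (c *\<^sub>C x) = c *\<^sub>C T x) \<and>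
     (\<exists>K. \<forall>x. norm (T x) \<le> norm x * K)"

definition BH :: "('a::complex_normed_vector \<Rightarrow> 'a) set" where
  "BH = {T. bounded_clinear T}"

definition is_adjoint :: "('a::complex_inner \<Rightarrow> 'a) \<Rightarrow> ('a \<Rightarrow> 'a) \<Rightarrow> bool" where
  "is_adjoint S T \<longleftrightarrow> (\<forall>x y. cinner (T x) y = cinner x (S y))"

text \<open>Strong operator topology on B(H): the topology of pointwise convergence, i.e. the
  subspace topology of the product topology on functions (HOL-Analysis Function_Topology).\<close>

definition von_neumann_algebra :: "('a::chilbert_space \<Rightarrow> 'a) set \<Rightarrow> bool" where
  "von_neumann_algebra A \<longleftrightarrow>
     A \<subseteq> BH \<and> id \<in> A \<and>
     (\<forall>S\<in>A. \<forall>T\<in>A. (\<lambda>x. S x + T x) \<in> A \<and> S \<circ> T \<in> A) \<and>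
     (\<forall>c. \<forall>S\<in>A. (\<lambda>x. c *\<^sub>C S x) \<in> A) \<and>
     (\<forall>T\<in>A. \<exists>S\<in>A. is_adjoint S T) \<and>
     closedin (top_of_set BH) A"

definition commutant :: "('a::complex_normed_vector \<Rightarrow> 'a) set \<Rightarrow> ('a \<Rightarrow> 'a) set" where
  "commutant A = {T \<in> BH. \<forall>S\<in>A. T \<circ> S = S \<circ> T}"

definition closed_csubspace :: "'a::complex_normed_vector set \<Rightarrow> bool" where
  "closed_csubspace M \<longleftrightarrow>
     0 \<in> M \<and> (\<forall>x\<in>M. \<forall>y\<in>M. x + y \<in> M) \<and> (\<forall>c. \<forall>x\<in>M. c *\<^sub>C x \<in> M) \<and> closed M"

definition Lat :: "('a::complex_normed_vector \<Rightarrow> 'a) set \<Rightarrow> 'a set set" where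
  "Lat S = {M. closed_csubspace M \<and> (\<forall>T\<in>S. T ` M \<subseteq> M)}"

definition invertible_op :: "('a::complex_normed_vector \<Rightarrow> 'a) \<Rightarrow> bool" where
  "invertible_op T \<longleftrightarrow> T \<in> BH \<and> (\<exists>U\<in>BH. U \<circ> T = id \<and> T \<circ> U = id)"

definition Col :: "('a::complex_normed_vector \<Rightarrow> 'a) set \<Rightarrow> ('a \<Rightarrow> 'a) set" where
  "Col S = {T. invertible_op T \<and>
     (\<forall>M. closed_csubspace M \<longrightarrow> (M \<in> Lat S \<longleftrightarrow> T ` M \<in> Lat S))}"

end

(*
  For a self-adjoint set S of operators, the closed subspaces invariant under the commutant S'
  can be described by Lat S alone: M is in Lat S' iff M = (M \<inter> N) + (M \<inter> L) for every pair
  N, L in Lat S of algebraic complements.  Necessity holds because the projection onto N \<in> Lat S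
  lies in S'.  Conversely such an M is reduced by the spectral projections of every self-adjoint
  h \<in> S' (constructed from square roots obtained by a monotone iteration), and approximating h
  on thin spectral bands by scalars shows that h M \<subseteq> M; the Cartesian decomposition b = h1 + i h2
  then handles all of S'.  Being phrased in terms of Lat S, the splitting condition is preserved by
  every element of Col S, whence Col S \<subseteq> Col S'.  Applying this also to S' and using
  Lat S'' = Lat S gives Col A = Col A'.
*)

theory Submission
  imports Defs
begin

section \<open>Complex inner product spaces\<close>

declare scaleC_one [simp]

lemma scaleC_of_real: "complex_of_real r *\<^sub>C x = r *\<^sub>R x"
  by (simp add: scaleR_scaleC)

lemma scaleC_zero_left [simp]: "0 *\<^sub>C x = 0"
  using scaleC_of_real[of 0 x] by simp

lemma scaleC_zero_right [simp]: "a *\<^sub>C (0::'a::complex_vector) = 0"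
  using scaleC_add_right[of a 0 0] by simp

lemma scaleC_minus_right: "a *\<^sub>C (- x) = - (a *\<^sub>C (x::'a::complex_vector))"
  using scaleC_add_right[of a "- x" x] by (simp add: eq_neg_iff_add_eq_0)

lemma scaleC_diff_right: "a *\<^sub>C (x - y) = a *\<^sub>C x - a *\<^sub>C (y::'a::complex_vector)"
  unfolding diff_conv_add_uminus by (simp only: scaleC_add_right scaleC_minus_right)

lemma cinner_add_left: "cinner (x + y) z = cinner x z + cinner y z"
  by (metis cinner_conj_commute cinner_add_right complex_cnj_add)

lemma cinner_scaleC_left: "cinner (a *\<^sub>C x) y = cnj a * cinner x y"
  by (metis cinner_conj_commute cinner_scaleC_right complex_cnj_mult)

lemma cinner_zero_right [simp]: "cinner x 0 = 0"
  using cinner_scaleC_right[of x 0 0] by simp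

lemma cinner_zero_left [simp]: "cinner 0 x = 0"
  by (metis cinner_conj_commute cinner_zero_right complex_cnj_zero)

lemma cinner_minus_right: "cinner x (- y) = - cinner x y"
  using cinner_add_right[of x "- y" y] by (simp add: eq_neg_iff_add_eq_0)

lemma cinner_minus_left: "cinner (- x) y = - cinner x y"
  using cinner_add_left[of "- x" x y] by (simp add: eq_neg_iff_add_eq_0)

lemma cinner_diff_right: "cinner x (y - z) = cinner x y - cinner x z"
  unfolding diff_conv_add_uminus by (simp only: cinner_add_right cinner_minus_right)

lemma cinner_diff_left: "cinner (x - y) z = cinner x z - cinner y z"
  unfolding diff_conv_add_uminus by (simp only: cinner_add_left cinner_minus_left)

lemma cinner_scaleR_right: "cinner x (r *\<^sub>R y) = complex_of_real r * cinner x y"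
  by (simp add: scaleR_scaleC cinner_scaleC_right)

lemma cinner_scaleR_left: "cinner (r *\<^sub>R x) y = complex_of_real r * cinner x y"
  by (simp add: scaleR_scaleC cinner_scaleC_left)

lemma cinner_self: "cinner x x = complex_of_real ((norm x)\<^sup>2)"
  using norm_eq_sqrt_cinner[of x] cinner_self_nonneg[of x] cinner_self_real[of x]
  by (simp add: complex_eq_iff)

lemma power2_norm_eq_cinner: "(norm x)\<^sup>2 = Re (cinner x x)"
  by (simp add: cinner_self)

lemma cinner_eq_0_commute: "cinner x y = 0 \<longleftrightarrow> cinner y x = 0"
  by (metis cinner_conj_commute complex_cnj_zero_iff)

lemma norm_add_square: "(norm (x + y))\<^sup>2 = (norm x)\<^sup>2 + (norm y)\<^sup>2 + 2 * Re (cinner x y)"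
proof -
  have "Re (cinner y x) = Re (cinner x y)"
    by (metis cinner_conj_commute complex_cnj_cnj cnj.simps(1))
  then show ?thesis by (simp add: power2_norm_eq_cinner cinner_add_left cinner_add_right)
qed

lemma norm_diff_square: "(norm (x - y))\<^sup>2 = (norm x)\<^sup>2 + (norm y)\<^sup>2 - 2 * Re (cinner x y)"
  using norm_add_square[of x "- y"] by (simp add: cinner_minus_right)

lemma cinner_Pythagorean: "cinner x y = 0 \<Longrightarrow> (norm (x + y))\<^sup>2 = (norm x)\<^sup>2 + (norm y)\<^sup>2"
  by (simp add: norm_add_square)

lemma norm_cinner_le: "cmod (cinner x y) \<le> norm x * norm y"
proof (cases "y = 0")
  case True then show ?thesis by simp
next
  case False
  define a where "a = cinner y x / complex_of_real ((norm y)\<^sup>2)"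
  have ny: "norm y > 0" using False by simp
  have "0 \<le> Re (cinner (x - a *\<^sub>C y) (x - a *\<^sub>C y))"
    by (rule cinner_self_nonneg)
  also have "cinner (x - a *\<^sub>C y) (x - a *\<^sub>C y) =
     cinner x x - a * cinner x y - cnj a * cinner y x + cnj a * a * cinner y y"
    by (simp add: cinner_diff_left cinner_diff_right cinner_scaleC_left cinner_scaleC_right
        algebra_simps)
  also have "cnj a * a * cinner y y = cnj a * cinner y x"
    using ny by (simp add: a_def cinner_self field_simps)
  also have "a * cinner x y = (cmod (cinner x y))\<^sup>2 / (norm y)\<^sup>2"
  proof -
    have "cinner y x * cinner x y = complex_of_real ((cmod (cinner x y))\<^sup>2)"
      by (metis cinner_conj_commute complex_norm_square mult.commute complex_mult_cnj)
    then show ?thesis by (simp add: a_def field_simps)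
  qed
  finally have "(cmod (cinner x y))\<^sup>2 \<le> (norm x * norm y)\<^sup>2"
    using ny by (simp add: cinner_self field_simps power_mult_distrib)
  then show ?thesis by (rule power2_le_imp_le) simp
qed

lemma Re_cinner_le: "Re (cinner x y) \<le> norm x * norm y"
  using norm_cinner_le[of x y] abs_Re_le_cmod[of "cinner x y"] by linarith

lemma cinner_ext: "(\<And>x. cinner x y = cinner x z) \<Longrightarrow> y = z"
  by (metis cinner_diff_right cinner_self_eq_zero right_minus_eq)

lemma bounded_linear_cinner_right: "bounded_linear (\<lambda>y. cinner x y)"
proof (rule bounded_linear_intro[where K = "norm x"])
  show "cmod (cinner x y) \<le> norm y * norm x" for y
    using norm_cinner_le[of x y] by (simp add: mult.commute)
qed (simp_all add: cinner_add_right cinner_scaleR_right scaleR_conv_of_real)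

lemma tendsto_cinner_right: "(f \<longlongrightarrow> l) F \<Longrightarrow> ((\<lambda>n. cinner x (f n)) \<longlongrightarrow> cinner x l) F"
  using bounded_linear.tendsto[OF bounded_linear_cinner_right] by blast

lemma tendsto_cinner_left: "(f \<longlongrightarrow> l) F \<Longrightarrow> ((\<lambda>n. cinner (f n) y) \<longlongrightarrow> cinner l y) F"
  using tendsto_cnj[OF tendsto_cinner_right[of f l F y]] by (simp add: cinner_conj_commute[of y])

section \<open>Closed subspaces and orthogonal projections\<close>

lemma closed_csubspace_zero: "closed_csubspace M \<Longrightarrow> 0 \<in> M"
  and closed_csubspace_add: "closed_csubspace M \<Longrightarrow> x \<in> M \<Longrightarrow> y \<in> M \<Longrightarrow> x + y \<in> M"
  and closed_csubspace_scaleC: "closed_csubspace M \<Longrightarrow> x \<in> M \<Longrightarrow> c *\<^sub>C x \<in> M"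
  and closed_csubspace_closed: "closed_csubspace M \<Longrightarrow> closed M"
  and closed_csubspace_scaleR: "closed_csubspace M \<Longrightarrow> x \<in> M \<Longrightarrow> r *\<^sub>R x \<in> M"
  by (simp_all add: closed_csubspace_def scaleR_scaleC)

lemma closed_csubspace_diff: "closed_csubspace M \<Longrightarrow> x \<in> M \<Longrightarrow> y \<in> M \<Longrightarrow> x - y \<in> M"
  using closed_csubspace_add[of M x "- y"] closed_csubspace_scaleR[of M y "- 1"] by simp

lemma closed_csubspace_Int:
  "closed_csubspace A \<Longrightarrow> closed_csubspace B \<Longrightarrow> closed_csubspace (A \<inter> B)"
  by (auto simp: closed_csubspace_def)

lemma closed_csubspace_UNIV: "closed_csubspace UNIV"
  by (simp add: closed_csubspace_def)

lemma minimizing_sequence_Cauchy: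
  fixes x :: "'a::complex_inner"
  assumes M: "closed_csubspace M" and f: "\<And>n. f n \<in> M"
    and lim: "(\<lambda>n. norm (x - f n)) \<longlonglongrightarrow> infdist x M"
  shows "Cauchy f"
proof (rule metric_CauchyI)
  define d where "d = infdist x M"
  have d_le: "d \<le> norm (x - m)" if "m \<in> M" for m
    using infdist_le[OF that, of x] by (simp add: d_def dist_norm)
  fix r :: real assume r: "r > 0"
  have "(\<lambda>n. (norm (x - f n))\<^sup>2) \<longlonglongrightarrow> d\<^sup>2"
    using lim by (simp add: d_def tendsto_power)
  moreover have "d\<^sup>2 < d\<^sup>2 + r\<^sup>2 / 4" using r by simp
  ultimately have "\<forall>\<^sub>F n in sequentially. (norm (x - f n))\<^sup>2 < d\<^sup>2 + r\<^sup>2 / 4"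
    by (rule order_tendstoD)
  then obtain N where N: "\<And>n. n \<ge> N \<Longrightarrow> (norm (x - f n))\<^sup>2 < d\<^sup>2 + r\<^sup>2 / 4"
    by (auto simp: eventually_sequentially)
  have "dist (f m) (f n) < r" if "m \<ge> N" "n \<ge> N" for m n
  proof -
    define u v where "u = x - f m" and "v = x - f n"
    \<comment> \<open>parallelogram law, with the midpoint of \<open>f m\<close> and \<open>f n\<close> lying in \<open>M\<close>\<close>
    have "(norm (u - v))\<^sup>2 + (norm (u + v))\<^sup>2 = 2 * (norm u)\<^sup>2 + 2 * (norm v)\<^sup>2"
      using norm_add_square[of u v] norm_diff_square[of u v] by simp
    moreover have "(2 * d)\<^sup>2 \<le> (norm (u + v))\<^sup>2"
    proof -
      have "(1/2) *\<^sub>R (f m + f n) \<in> M"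
        using M f closed_csubspace_add closed_csubspace_scaleR by blast
      then have "d \<le> norm (x - (1/2) *\<^sub>R (f m + f n))" by (rule d_le)
      moreover have "u + v = 2 *\<^sub>R (x - (1/2) *\<^sub>R (f m + f n))"
        by (simp add: u_def v_def algebra_simps scaleR_2)
      ultimately have "2 * d \<le> norm (u + v)" by simp
      then show ?thesis by (rule power_mono) (simp add: d_def infdist_nonneg)
    qed
    ultimately have "(norm (f m - f n))\<^sup>2 < r\<^sup>2"
      using N[OF \<open>m \<ge> N\<close>] N[OF \<open>n \<ge> N\<close>] by (simp add: u_def v_def norm_minus_commute power_mult_distrib)
    then show ?thesis
      using r by (simp add: dist_norm power_less_imp_less_base)
  qed
  then show "\<exists>N. \<forall>m\<ge>N. \<forall>n\<ge>N. dist (f m) (f n) < r" by blast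
qed

lemma best_approximation_exists:
  fixes x :: "'a::chilbert_space"
  assumes M: "closed_csubspace M"
  shows "\<exists>p\<in>M. \<forall>m\<in>M. norm (x - p) \<le> norm (x - m)"
proof -
  have "M \<noteq> {}" using closed_csubspace_zero[OF M] by auto
  have "\<forall>n. \<exists>a\<in>M. dist x a < infdist x M + inverse (real (Suc n))"
  proof
    fix n
    have "infdist x M < infdist x M + inverse (real (Suc n))" by simp
    then show "\<exists>a\<in>M. dist x a < infdist x M + inverse (real (Suc n))"
      unfolding infdist_notempty[OF \<open>M \<noteq> {}\<close>] cINF_less_iff[OF \<open>M \<noteq> {}\<close> bdd_below_image_dist] .
  qed
  then obtain f where f: "\<And>n. f n \<in> M"
    and f_less: "\<And>n. norm (x - f n) < infdist x M + inverse (real (Suc n))"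
    by (metis dist_norm)
  have upper: "(\<lambda>n. infdist x M + inverse (real (Suc n))) \<longlonglongrightarrow> infdist x M"
    using tendsto_add[OF tendsto_const LIMSEQ_inverse_real_of_nat] by simp
  have "\<forall>n. infdist x M \<le> norm (x - f n)"
    using infdist_le[OF f] by (simp add: dist_norm)
  moreover have "\<forall>n. norm (x - f n) \<le> infdist x M + inverse (real (Suc n))"
    using f_less by (simp add: less_imp_le)
  ultimately have lim: "(\<lambda>n. norm (x - f n)) \<longlonglongrightarrow> infdist x M"
    by (intro real_tendsto_sandwich[OF always_eventually always_eventually tendsto_const upper])
  obtain p where p: "f \<longlonglongrightarrow> p"
    using minimizing_sequence_Cauchy[OF M f lim] Cauchy_convergent_iff convergent_def by blast
  have "p \<in> M" using closed_sequentially[OF closed_csubspace_closed[OF M] f p] .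
  moreover have "norm (x - p) = infdist x M"
    using LIMSEQ_unique[OF tendsto_norm[OF tendsto_diff[OF tendsto_const p]] lim] .
  moreover have "infdist x M \<le> norm (x - m)" if "m \<in> M" for m
    using infdist_le[OF that, of x] by (simp add: dist_norm)
  ultimately show ?thesis by metis
qed

lemma best_approximation_orthogonal:
  fixes x :: "'a::complex_inner"
  assumes M: "closed_csubspace M" and p: "p \<in> M"
    and p_min: "\<And>m. m \<in> M \<Longrightarrow> norm (x - p) \<le> norm (x - m)" and w: "w \<in> M"
  shows "cinner w (x - p) = 0"
proof (rule ccontr)
  define z a where "z = x - p" and "a = cinner w z"
  assume "cinner w (x - p) \<noteq> 0"
  then have a0: "(cmod a)\<^sup>2 > 0" by (simp add: a_def z_def)
  \<comment> \<open>moving from \<open>p\<close> towards \<open>p + t a w\<close> decreases the distance for small \<open>t > 0\<close>\<close>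
  define t where "t = 1 / ((norm w)\<^sup>2 + 1)"
  have "(norm w)\<^sup>2 + 1 > 0"
    using zero_le_power2[of "norm w"] by (simp add: add_nonneg_pos)
  then have t: "t > 0" "t * (norm w)\<^sup>2 < 1"
    unfolding t_def by (simp_all add: divide_less_eq)
  have "p + (complex_of_real t * a) *\<^sub>C w \<in> M"
    using M p w closed_csubspace_add closed_csubspace_scaleC by blast
  from p_min[OF this] have "norm z \<le> norm (z - (complex_of_real t * a) *\<^sub>C w)"
    by (simp add: z_def diff_diff_eq)
  then have "(norm z)\<^sup>2 \<le> (norm (z - (complex_of_real t * a) *\<^sub>C w))\<^sup>2"
    by (simp add: power_mono)
  also have "\<dots> = (norm z)\<^sup>2 + (t * cmod a * norm w)\<^sup>2 - 2 * (t * (cmod a)\<^sup>2)"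
  proof -
    have "cinner z w = cnj a" by (simp add: a_def cinner_conj_commute[of w z])
    then have "cinner z ((complex_of_real t * a) *\<^sub>C w) = complex_of_real (t * (cmod a)\<^sup>2)"
      using complex_norm_square[of a] by (simp add: cinner_scaleC_right mult.assoc)
    then show ?thesis
      using t by (simp add: norm_diff_square norm_scaleC norm_mult)
  qed
  finally have "2 * (cmod a)\<^sup>2 \<le> (cmod a)\<^sup>2 * (t * (norm w)\<^sup>2)"
    using t by (simp add: power_mult_distrib power2_eq_square algebra_simps)
  also have "\<dots> < (cmod a)\<^sup>2" using a0 t by simp
  finally show False using a0 by simp
qed

definition orth :: "'a::complex_inner set \<Rightarrow> 'a set" where
  "orth M = {y. \<forall>x\<in>M. cinner x y = 0}"

definition proj :: "'a::complex_inner set \<Rightarrow> 'a \<Rightarrow> 'a" where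
  "proj M x = (THE p. p \<in> M \<and> (\<forall>m\<in>M. cinner m (x - p) = 0))"

lemma closed_csubspace_orth: "closed_csubspace (orth M)"
proof -
  have "closed ((\<lambda>y. cinner x y) -` {0})" for x
    by (rule continuous_closed_vimage[OF closed_singleton linear_continuous_at[OF bounded_linear_cinner_right]])
  then have "closed (\<Inter>x\<in>M. (\<lambda>y. cinner x y) -` {0})" by (intro closed_INT) auto
  also have "(\<Inter>x\<in>M. (\<lambda>y. cinner x y) -` {0}) = orth M" by (auto simp: orth_def)
  finally show ?thesis by (auto simp: closed_csubspace_def orth_def cinner_add_right cinner_scaleC_right)
qed

lemma orth_Int: "x \<in> M \<Longrightarrow> x \<in> orth M \<Longrightarrow> x = 0"
  using cinner_self_eq_zero by (auto simp: orth_def)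

lemma proj_unique:
  fixes x :: "'a::complex_inner"
  assumes M: "closed_csubspace M"
    and "p \<in> M" "\<forall>m\<in>M. cinner m (x - p) = 0"
    and "q \<in> M" "\<forall>m\<in>M. cinner m (x - q) = 0"
  shows "p = q"
proof -
  have "p - q \<in> M" using assms closed_csubspace_diff by blast
  then have "cinner (p - q) (x - q) - cinner (p - q) (x - p) = 0" using assms by simp
  then have "cinner (p - q) (p - q) = 0" by (simp add: cinner_diff_right algebra_simps)
  then show ?thesis by (simp add: cinner_self_eq_zero)
qed

context
  fixes M :: "'a::chilbert_space set"
  assumes M: "closed_csubspace M"
begin

lemma proj_characterization: "proj M x \<in> M \<and> (\<forall>m\<in>M. cinner m (x - proj M x) = 0)"
proof -
  obtain p where p: "p \<in> M \<and> (\<forall>m\<in>M. cinner m (x - p) = 0)"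
    using best_approximation_exists[OF M, of x] best_approximation_orthogonal[OF M] by blast
  have "proj M x = p" unfolding proj_def
    by (rule the_equality) (use p proj_unique[OF M] in blast)+
  then show ?thesis using p by simp
qed

lemma proj_in: "proj M x \<in> M"
  using proj_characterization by blast

lemma proj_orth: "m \<in> M \<Longrightarrow> cinner m (x - proj M x) = 0"
  using proj_characterization by blast

lemma proj_eqI: "p \<in> M \<Longrightarrow> (\<And>m. m \<in> M \<Longrightarrow> cinner m (x - p) = 0) \<Longrightarrow> proj M x = p"
  using proj_unique[OF M, of "proj M x" x p] proj_characterization by blast

lemma proj_id: "m \<in> M \<Longrightarrow> proj M m = m"
  by (rule proj_eqI) auto

lemma proj_eq_self_iff: "proj M x = x \<longleftrightarrow> x \<in> M"
  using proj_id proj_in by metis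

lemma proj_residual_orth: "x - proj M x \<in> orth M"
  using proj_orth by (simp add: orth_def)

lemma proj_eq_0_iff: "proj M x = 0 \<longleftrightarrow> x \<in> orth M"
proof
  assume "proj M x = 0" then show "x \<in> orth M" using proj_residual_orth[of x] by simp
next
  assume "x \<in> orth M"
  then show "proj M x = 0" by (intro proj_eqI) (auto simp: orth_def closed_csubspace_zero[OF M])
qed

lemma proj_add: "proj M (x + y) = proj M x + proj M y"
proof (rule proj_eqI)
  show "proj M x + proj M y \<in> M" using closed_csubspace_add[OF M] proj_in by blast
  fix m assume "m \<in> M"
  have e: "x + y - (proj M x + proj M y) = (x - proj M x) + (y - proj M y)" by (simp add: algebra_simps)
  show "cinner m (x + y - (proj M x + proj M y)) = 0"
    unfolding e cinner_add_right using proj_orth[OF \<open>m \<in> M\<close>] by simp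
qed

lemma proj_scaleC: "proj M (c *\<^sub>C x) = c *\<^sub>C proj M x"
proof (rule proj_eqI)
  show "c *\<^sub>C proj M x \<in> M" using closed_csubspace_scaleC[OF M proj_in] .
  show "cinner m (c *\<^sub>C x - c *\<^sub>C proj M x) = 0" if "m \<in> M" for m
    using proj_orth[OF that] by (simp add: scaleC_diff_right[symmetric] cinner_scaleC_right)
qed

lemma proj_Pythagorean: "(norm x)\<^sup>2 = (norm (proj M x))\<^sup>2 + (norm (x - proj M x))\<^sup>2"
  using cinner_Pythagorean[OF proj_orth[OF proj_in[of x], of x]] by simp

lemma norm_proj_le: "norm (proj M x) \<le> norm x"
proof (rule power2_le_imp_le)
  show "(norm (proj M x))\<^sup>2 \<le> (norm x)\<^sup>2"
    using proj_Pythagorean[of x] zero_le_power2[of "norm (x - proj M x)"] by linarith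
qed simp

lemma norm_proj_residual_le: "norm (x - proj M x) \<le> norm x"
proof (rule power2_le_imp_le)
  show "(norm (x - proj M x))\<^sup>2 \<le> (norm x)\<^sup>2"
    using proj_Pythagorean[of x] zero_le_power2[of "norm (proj M x)"] by linarith
qed simp

lemma proj_selfadjoint_cinner: "cinner (proj M x) y = cinner x (proj M y)"
proof -
  have "cinner (proj M x) (y - proj M y) = 0" "cinner (x - proj M x) (proj M y) = 0"
    using proj_orth[OF proj_in] proj_orth[OF proj_in, of y x] cinner_eq_0_commute by blast+
  then show ?thesis by (simp add: cinner_diff_left cinner_diff_right)
qed

end

section \<open>Bounded operators and adjoints\<close>

definition clinear :: "('a::complex_vector \<Rightarrow> 'b::complex_vector) \<Rightarrow> bool" where
  "clinear T \<longleftrightarrow> (\<forall>x y. T (x + y) = T x + T y) \<and> (\<forall>c x. T (c *\<^sub>C x) = c *\<^sub>C T x)"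

lemma bounded_clinear_iff: "bounded_clinear T \<longleftrightarrow> clinear T \<and> (\<exists>K. \<forall>x. norm (T x) \<le> norm x * K)"
  by (simp add: bounded_clinear_def clinear_def)

lemma bounded_clinear_clinear: "bounded_clinear T \<Longrightarrow> clinear T"
  by (simp add: bounded_clinear_iff)

lemma clinear_add: "clinear T \<Longrightarrow> T (x + y) = T x + T y"
  and clinear_scaleC: "clinear T \<Longrightarrow> T (c *\<^sub>C x) = c *\<^sub>C T x"
  by (simp_all add: clinear_def)

lemma clinear_zero: "clinear T \<Longrightarrow> T 0 = 0"
  using clinear_scaleC[of T 0 0] by simp

lemma clinear_scaleR: "clinear T \<Longrightarrow> T (r *\<^sub>R x) = r *\<^sub>R T x"
  by (simp add: clinear_scaleC scaleR_scaleC)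

lemma clinear_diff: "clinear T \<Longrightarrow> T (x - y) = T x - T y"
  using clinear_add[of T x "- y"] clinear_scaleR[of T "- 1" y] by simp

lemma bounded_clinear_pos_bound: "bounded_clinear T \<Longrightarrow> \<exists>K>0. \<forall>x. norm (T x) \<le> K * norm x"
proof -
  assume "bounded_clinear T"
  then obtain K where K: "\<And>x. norm (T x) \<le> norm x * K" by (auto simp: bounded_clinear_iff)
  have "norm (T x) \<le> max K 1 * norm x" for x
    using order_trans[OF K mult_left_mono[OF max.cobounded1 norm_ge_zero]] by (simp add: mult.commute)
  then show ?thesis by (intro exI[of _ "max K 1"]) auto
qed

lemma bounded_clinear_bounded_linear: "bounded_clinear T \<Longrightarrow> bounded_linear T"
  by (auto simp: bounded_clinear_iff clinear_add clinear_scaleR intro: bounded_linear_intro)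

lemma bounded_clinear_tendsto:
  "bounded_clinear T \<Longrightarrow> (f \<longlongrightarrow> l) F \<Longrightarrow> ((\<lambda>n. T (f n)) \<longlongrightarrow> T l) F"
  using bounded_clinear_bounded_linear bounded_linear.tendsto by blast

lemma bounded_clinear_ident: "bounded_clinear (\<lambda>x. x)"
  unfolding bounded_clinear_iff clinear_def by (intro conjI exI[of _ 1]) auto

lemma bounded_clinear_zero: "bounded_clinear (\<lambda>x. 0)"
  unfolding bounded_clinear_iff clinear_def by (auto intro!: exI[of _ 0])

lemma bounded_clinear_compose:
  assumes S: "bounded_clinear S" and T: "bounded_clinear T"
  shows "bounded_clinear (\<lambda>x. S (T x))"
proof -
  obtain K where K: "K > 0" "\<And>x. norm (S x) \<le> K * norm x" using bounded_clinear_pos_bound[OF S] by blast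
  obtain L where L: "\<And>x. norm (T x) \<le> L * norm x" using bounded_clinear_pos_bound[OF T] by blast
  have "norm (S (T x)) \<le> norm x * (K * L)" for x
    using order_trans[OF K(2) mult_left_mono[OF L less_imp_le[OF K(1)]]] by (simp add: algebra_simps)
  then show ?thesis using S T unfolding bounded_clinear_iff clinear_def by auto
qed

lemma bounded_clinear_add:
  assumes S: "bounded_clinear S" and T: "bounded_clinear T"
  shows "bounded_clinear (\<lambda>x. S x + T x)"
proof -
  obtain K where K: "\<And>x. norm (S x) \<le> K * norm x" using bounded_clinear_pos_bound[OF S] by blast
  obtain L where L: "\<And>x. norm (T x) \<le> L * norm x" using bounded_clinear_pos_bound[OF T] by blast
  have "norm (S x + T x) \<le> norm x * (K + L)" for x
    using norm_triangle_ineq[of "S x" "T x"] K[of x] L[of x] by (simp add: algebra_simps)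
  moreover have "clinear (\<lambda>x. S x + T x)"
    using S T by (auto simp: clinear_def bounded_clinear_iff scaleC_add_right algebra_simps)
  ultimately show ?thesis unfolding bounded_clinear_iff by blast
qed

lemma bounded_clinear_scaleC:
  assumes T: "bounded_clinear T"
  shows "bounded_clinear (\<lambda>x. c *\<^sub>C T x)"
proof -
  obtain L where L: "\<And>x. norm (T x) \<le> L * norm x" using bounded_clinear_pos_bound[OF T] by blast
  have "norm (c *\<^sub>C T x) \<le> norm x * (cmod c * L)" for x
    using mult_left_mono[OF L[of x] norm_ge_zero[of c]] by (simp add: norm_scaleC algebra_simps)
  moreover have "clinear (\<lambda>x. c *\<^sub>C T x)"
    using T by (auto simp: clinear_def bounded_clinear_iff scaleC_add_right scaleC_scaleC mult.commute)
  ultimately show ?thesis unfolding bounded_clinear_iff by blast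
qed

lemma bounded_clinear_scaleR: "bounded_clinear T \<Longrightarrow> bounded_clinear (\<lambda>x. r *\<^sub>R T x)"
  using bounded_clinear_scaleC[of T "complex_of_real r"] by (simp add: scaleR_scaleC)

lemma bounded_clinear_diff:
  "bounded_clinear S \<Longrightarrow> bounded_clinear T \<Longrightarrow> bounded_clinear (\<lambda>x. S x - T x)"
  using bounded_clinear_add[of S "\<lambda>x. (- 1) *\<^sub>R T x"] bounded_clinear_scaleR[of T "- 1"] by simp

lemma closed_csubspace_kernel:
  assumes T: "bounded_clinear T"
  shows "closed_csubspace {x. T x = 0}"
proof -
  have "closed (T -` {0})"
    using continuous_closed_vimage[OF closed_singleton]
      linear_continuous_at[OF bounded_clinear_bounded_linear[OF T]] by blast
  moreover have "T -` {0} = {x. T x = 0}" by auto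
  ultimately show ?thesis
    using bounded_clinear_clinear[OF T]
    by (auto simp: closed_csubspace_def clinear_add clinear_scaleC clinear_zero)
qed

lemma bounded_clinear_proj:
  assumes M: "closed_csubspace (M::'a::chilbert_space set)"
  shows "bounded_clinear (proj M)"
  unfolding bounded_clinear_iff clinear_def
  using proj_add[OF M] proj_scaleC[OF M] norm_proj_le[OF M] by (auto intro!: exI[of _ 1])

lemma proj_commute_reducing:
  assumes M: "closed_csubspace (M::'a::chilbert_space set)"
    and s: "clinear s" and adj: "\<And>x y. cinner (s x) y = cinner x (s' y)"
    and sM: "\<And>x. x \<in> M \<Longrightarrow> s x \<in> M" and s'M: "\<And>x. x \<in> M \<Longrightarrow> s' x \<in> M"
  shows "proj M (s x) = s (proj M x)"
proof (rule proj_eqI[OF M])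
  show "s (proj M x) \<in> M" using sM proj_in[OF M] by blast
  fix m assume m: "m \<in> M"
  have "cinner (s (x - proj M x)) m = cinner (x - proj M x) (s' m)" by (rule adj)
  also have "\<dots> = 0"
    using proj_residual_orth[OF M, of x] s'M[OF m] by (auto simp: orth_def cinner_eq_0_commute)
  finally show "cinner m (s x - s (proj M x)) = 0"
    by (simp add: clinear_diff[OF s, symmetric] cinner_eq_0_commute)
qed

lemma Riesz_representation:
  fixes \<phi> :: "'a::chilbert_space \<Rightarrow> complex"
  assumes add: "\<And>x y. \<phi> (x + y) = \<phi> x + \<phi> y" and sc: "\<And>c x. \<phi> (c *\<^sub>C x) = c * \<phi> x"
    and bd: "\<And>x. cmod (\<phi> x) \<le> K * norm x"
  shows "\<exists>z. \<forall>x. \<phi> x = cinner z x"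
proof (cases "\<forall>x. \<phi> x = 0")
  case True then show ?thesis by (intro exI[of _ 0]) simp
next
  case False
  then obtain x0 where x0: "\<phi> x0 \<noteq> 0" by blast
  have "\<phi> (r *\<^sub>R x) = r *\<^sub>R \<phi> x" for r x
    using sc[of "complex_of_real r" x] by (simp add: scaleR_scaleC scaleR_conv_of_real)
  then have "bounded_linear \<phi>"
    by (intro bounded_linear_intro[of \<phi> K]) (use add bd in \<open>auto simp: mult.commute\<close>)
  then have "closed (\<phi> -` {0})"
    using continuous_closed_vimage[OF closed_singleton linear_continuous_at] by blast
  moreover have "\<phi> 0 = 0" using sc[of 0 0] by simp
  ultimately have N: "closed_csubspace (\<phi> -` {0})"
    by (auto simp: closed_csubspace_def add sc)
  \<comment> \<open>the Riesz vector is a multiple of the component of \<open>x0\<close> orthogonal to the kernel\<close>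
  define w where "w = x0 - proj (\<phi> -` {0}) x0"
  have w_orth: "w \<in> orth (\<phi> -` {0})" unfolding w_def by (rule proj_residual_orth[OF N])
  have "\<phi> w = \<phi> x0"
    using add[of w "proj (\<phi> -` {0}) x0"] proj_in[OF N, of x0] by (simp add: w_def)
  then have \<phi>w: "\<phi> w \<noteq> 0" using x0 by simp
  then have "w \<noteq> 0" using \<open>\<phi> 0 = 0\<close> by auto
  have "\<phi> x = cinner ((cnj (\<phi> w) / complex_of_real ((norm w)\<^sup>2)) *\<^sub>C w) x" for x
  proof -
    have "\<phi> (x - (\<phi> x / \<phi> w) *\<^sub>C w) = 0"
      using add[of "x - (\<phi> x / \<phi> w) *\<^sub>C w" "(\<phi> x / \<phi> w) *\<^sub>C w"] sc \<phi>w by simp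
    then have "cinner w (x - (\<phi> x / \<phi> w) *\<^sub>C w) = 0"
      using w_orth cinner_eq_0_commute by (auto simp: orth_def)
    then have "cinner w x = (\<phi> x / \<phi> w) * complex_of_real ((norm w)\<^sup>2)"
      by (simp add: cinner_diff_right cinner_scaleC_right cinner_self)
    then show ?thesis
      using \<phi>w \<open>w \<noteq> 0\<close> by (simp add: cinner_scaleC_left field_simps)
  qed
  then show ?thesis by blast
qed

lemma adjoint_exists:
  fixes T :: "'a::chilbert_space \<Rightarrow> 'a"
  assumes T: "bounded_clinear T"
  shows "\<exists>S. bounded_clinear S \<and> (\<forall>x y. cinner (T x) y = cinner x (S y))"
proof -
  obtain K where K: "K > 0" "\<And>x. norm (T x) \<le> K * norm x"
    using bounded_clinear_pos_bound[OF T] by blast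
  have Tl: "clinear T" using bounded_clinear_clinear[OF T] .
  have "\<exists>z. \<forall>x. cinner y (T x) = cinner z x" for y
  proof (rule Riesz_representation[where K = "norm y * K"])
    show "cmod (cinner y (T x)) \<le> norm y * K * norm x" for x
      using order_trans[OF norm_cinner_le mult_left_mono[OF K(2) norm_ge_zero]] by (simp add: mult.assoc)
  qed (simp_all add: clinear_add[OF Tl] clinear_scaleC[OF Tl] cinner_add_right cinner_scaleC_right)
  then have "\<forall>y. \<exists>z. \<forall>x. cinner (T x) y = cinner x z"
    by (metis cinner_conj_commute)
  then obtain S where S: "\<And>x y. cinner (T x) y = cinner x (S y)" by metis
  have "S (y1 + y2) = S y1 + S y2" for y1 y2
    by (rule cinner_ext) (simp add: S[symmetric] cinner_add_right)
  moreover have "S (c *\<^sub>C y) = c *\<^sub>C S y" for c y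
    by (rule cinner_ext) (simp add: S[symmetric] cinner_scaleC_right)
  moreover have "norm (S y) \<le> norm y * K" for y
  proof -
    have "(norm (S y))\<^sup>2 = Re (cinner (T (S y)) y)" by (simp add: power2_norm_eq_cinner S)
    also have "\<dots> \<le> norm (T (S y)) * norm y" by (rule Re_cinner_le)
    also have "\<dots> \<le> K * norm (S y) * norm y" using K(2) by (intro mult_right_mono) auto
    finally have "norm (S y) * norm (S y) \<le> norm (S y) * (norm y * K)"
      by (simp add: power2_eq_square algebra_simps)
    then show ?thesis
      using K by (cases "S y = 0") (auto simp: mult_le_cancel_left_pos)
  qed
  ultimately have "bounded_clinear S" unfolding bounded_clinear_iff clinear_def by blast
  then show ?thesis using S by blast
qed

section \<open>Self-adjoint and positive operators\<close>

definition selfadjoint :: "('a::complex_inner \<Rightarrow> 'a) \<Rightarrow> bool" where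
  "selfadjoint h \<longleftrightarrow> bounded_clinear h \<and> (\<forall>x y. cinner (h x) y = cinner x (h y))"

definition positive_op :: "('a::complex_inner \<Rightarrow> 'a) \<Rightarrow> bool" where
  "positive_op a \<longleftrightarrow> selfadjoint a \<and> (\<forall>x. 0 \<le> Re (cinner x (a x)))"

definition loewner_le :: "('a::complex_inner \<Rightarrow> 'a) \<Rightarrow> ('a \<Rightarrow> 'a) \<Rightarrow> bool" where
  "loewner_le a b \<longleftrightarrow> positive_op (\<lambda>x. b x - a x)"

lemma selfadjoint_bounded_clinear: "selfadjoint h \<Longrightarrow> bounded_clinear h"
  and selfadjoint_cinner: "selfadjoint h \<Longrightarrow> cinner (h x) y = cinner x (h y)"
  by (simp_all add: selfadjoint_def)

lemma selfadjoint_clinear: "selfadjoint h \<Longrightarrow> clinear h"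
  by (simp add: selfadjoint_def bounded_clinear_clinear)

lemma positive_op_selfadjoint: "positive_op a \<Longrightarrow> selfadjoint a"
  and positive_op_nonneg: "positive_op a \<Longrightarrow> 0 \<le> Re (cinner x (a x))"
  by (simp_all add: positive_op_def)

lemma selfadjoint_ident: "selfadjoint (\<lambda>x. x)"
  by (simp add: selfadjoint_def bounded_clinear_ident)

lemma selfadjoint_zero: "selfadjoint (\<lambda>x. 0)"
  by (simp add: selfadjoint_def bounded_clinear_zero)

lemma selfadjoint_add: "selfadjoint a \<Longrightarrow> selfadjoint b \<Longrightarrow> selfadjoint (\<lambda>x. a x + b x)"
  by (simp add: selfadjoint_def bounded_clinear_add cinner_add_left cinner_add_right)

lemma selfadjoint_diff: "selfadjoint a \<Longrightarrow> selfadjoint b \<Longrightarrow> selfadjoint (\<lambda>x. a x - b x)"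
  by (simp add: selfadjoint_def bounded_clinear_diff cinner_diff_left cinner_diff_right)

lemma selfadjoint_scaleR: "selfadjoint a \<Longrightarrow> selfadjoint (\<lambda>x. r *\<^sub>R a x)"
  by (simp add: selfadjoint_def bounded_clinear_scaleR cinner_scaleR_left cinner_scaleR_right)

lemma selfadjoint_compose_commuting:
  "selfadjoint a \<Longrightarrow> selfadjoint b \<Longrightarrow> (\<And>x. a (b x) = b (a x)) \<Longrightarrow> selfadjoint (\<lambda>x. a (b x))"
  unfolding selfadjoint_def using bounded_clinear_compose by metis

lemma selfadjoint_proj: "closed_csubspace (M::'a::chilbert_space set) \<Longrightarrow> selfadjoint (proj M)"
  by (simp add: selfadjoint_def bounded_clinear_proj proj_selfadjoint_cinner)

lemma proj_commute_selfadjoint: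
  assumes M: "closed_csubspace (M::'a::chilbert_space set)" and h: "selfadjoint h"
    and hM: "\<And>x. x \<in> M \<Longrightarrow> h x \<in> M"
  shows "proj M (h x) = h (proj M x)"
  using proj_commute_reducing[OF M selfadjoint_clinear[OF h]] selfadjoint_cinner[OF h] hM by blast

lemma selfadjoint_orth_invariant:
  assumes h: "selfadjoint h" and hM: "\<And>x. x \<in> M \<Longrightarrow> h x \<in> M" and y: "y \<in> orth M"
  shows "h y \<in> orth M"
  using y hM by (simp add: orth_def selfadjoint_cinner[OF h, symmetric])

lemma positive_op_zero: "positive_op (\<lambda>x. 0)"
  by (simp add: positive_op_def selfadjoint_zero)

lemma positive_op_add: "positive_op a \<Longrightarrow> positive_op b \<Longrightarrow> positive_op (\<lambda>x. a x + b x)"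
  unfolding positive_op_def by (auto simp: selfadjoint_add cinner_add_right)

lemma positive_op_scaleR: "positive_op a \<Longrightarrow> r \<ge> 0 \<Longrightarrow> positive_op (\<lambda>x. r *\<^sub>R a x)"
  unfolding positive_op_def by (auto simp: selfadjoint_scaleR cinner_scaleR_right)

lemma positive_op_square: "selfadjoint a \<Longrightarrow> positive_op (\<lambda>x. a (a x))"
  using selfadjoint_compose_commuting[of a a]
  by (simp add: positive_op_def selfadjoint_cinner[of a _ "a _", symmetric] cinner_self)

lemma loewner_le_refl: "loewner_le a a"
  by (simp add: loewner_le_def positive_op_zero)

lemma loewner_le_trans: "loewner_le a b \<Longrightarrow> loewner_le b c \<Longrightarrow> loewner_le a c"
  unfolding loewner_le_def using positive_op_add[of "\<lambda>x. b x - a x" "\<lambda>x. c x - b x"] by simp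

lemma loewner_incseq_le:
  assumes inc: "\<And>n. loewner_le (z n) (z (Suc n))" and "n \<le> m"
  shows "loewner_le (z n) (z m)"
  using \<open>n \<le> m\<close>
proof (induction m rule: dec_induct)
  case base then show ?case by (rule loewner_le_refl)
next
  case (step m) then show ?case using loewner_le_trans inc by blast
qed

section \<open>Cauchy--Schwarz inequality for positive operators\<close>

lemma quadratic_nonneg_discriminant:
  fixes A B C :: real
  assumes C: "C \<ge> 0" and q: "\<And>t. 0 \<le> A - 2 * t * B + t\<^sup>2 * C"
  shows "B\<^sup>2 \<le> A * C"
proof (cases "C > 0")
  case True
  have "0 \<le> A - 2 * (B / C) * B + (B / C)\<^sup>2 * C" by (rule q)
  also have "\<dots> = A - B\<^sup>2 / C" using True by (simp add: power2_eq_square field_simps)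
  finally show ?thesis using True by (simp add: field_simps)
next
  case False
  then have "C = 0" using C by simp
  have "B = 0"
  proof (rule ccontr)
    assume "B \<noteq> 0"
    have "0 \<le> A - 2 * ((\<bar>A\<bar> + 1) / (2 * B)) * B" using q[of "(\<bar>A\<bar> + 1) / (2 * B)"] \<open>C = 0\<close> by simp
    also have "\<dots> = A - (\<bar>A\<bar> + 1)" using \<open>B \<noteq> 0\<close> by (simp add: field_simps)
    finally show False by linarith
  qed
  then show ?thesis using \<open>C = 0\<close> by simp
qed

text \<open>The generalised Cauchy--Schwarz inequality for the positive form \<open>(u, v) \<mapsto> \<langle>u, k v\<rangle>\<close>,
  applied to \<open>y\<close> and \<open>k y\<close>; positivity is only needed on a \<open>k\<close>-invariant subspace.\<close>

lemma positive_on_subspace_Cauchy_Schwarz: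
  assumes k: "selfadjoint k" and R: "closed_csubspace R" and kR: "\<And>w. w \<in> R \<Longrightarrow> k w \<in> R"
    and posR: "\<And>w. w \<in> R \<Longrightarrow> 0 \<le> Re (cinner w (k w))" and y: "y \<in> R"
  shows "(norm (k y))^4 \<le> Re (cinner y (k y)) * Re (cinner (k y) (k (k y)))"
proof -
  define A B C where "A = Re (cinner y (k y))" and "B = (norm (k y))\<^sup>2"
    and "C = Re (cinner (k y) (k (k y)))"
  have kl: "clinear k" by (rule selfadjoint_clinear[OF k])
  have "0 \<le> A - 2 * t * B + t\<^sup>2 * C" for t
  proof -
    have "y - t *\<^sub>R k y \<in> R"
      using R y kR closed_csubspace_diff closed_csubspace_scaleR by blast
    have "cinner (y - t *\<^sub>R k y) (k (y - t *\<^sub>R k y)) =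
        cinner y (k y) - complex_of_real t * cinner y (k (k y)) - complex_of_real t * cinner (k y) (k y)
        + complex_of_real t * complex_of_real t * cinner (k y) (k (k y))"
      by (simp add: clinear_diff[OF kl] clinear_scaleR[OF kl] cinner_diff_left cinner_diff_right
          cinner_scaleR_left cinner_scaleR_right algebra_simps)
    also have "cinner y (k (k y)) = cinner (k y) (k y)"
      by (rule selfadjoint_cinner[OF k, symmetric])
    finally have "Re (cinner (y - t *\<^sub>R k y) (k (y - t *\<^sub>R k y))) = A - 2 * t * B + t\<^sup>2 * C"
      by (simp add: A_def B_def C_def cinner_self power2_eq_square)
    then show ?thesis using posR[OF \<open>y - t *\<^sub>R k y \<in> R\<close>] by simp
  qed
  then have "B\<^sup>2 \<le> A * C"
    using quadratic_nonneg_discriminant posR[OF kR[OF y]] by (simp add: C_def)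
  then show ?thesis by (simp add: A_def B_def C_def power_mult[symmetric])
qed

lemma norm_le_of_numerical_range_le:
  assumes k: "selfadjoint k" and R: "closed_csubspace R" and kR: "\<And>w. w \<in> R \<Longrightarrow> k w \<in> R"
    and posR: "\<And>w. w \<in> R \<Longrightarrow> 0 \<le> Re (cinner w (k w))"
    and upR: "\<And>w. w \<in> R \<Longrightarrow> Re (cinner w (k w)) \<le> K * (norm w)\<^sup>2" and y: "y \<in> R"
  shows "norm (k y) \<le> K * norm y"
proof (cases "k y = 0")
  case True
  have "0 \<le> K * (norm y)\<^sup>2" using posR[OF y] upR[OF y] by linarith
  then show ?thesis using True by (cases "y = 0") (simp_all add: zero_le_mult_iff)
next
  case False
  have "(norm (k y))^4 \<le> Re (cinner y (k y)) * Re (cinner (k y) (k (k y)))"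
    by (rule positive_on_subspace_Cauchy_Schwarz[OF k R kR posR y])
  also have "\<dots> \<le> (K * (norm y)\<^sup>2) * (K * (norm (k y))\<^sup>2)"
    using posR[OF y] posR[OF kR[OF y]] upR[OF y] upR[OF kR[OF y]] by (intro mult_mono) auto
  finally have "(norm (k y))\<^sup>2 * (norm (k y))\<^sup>2 \<le> (K * norm y)\<^sup>2 * (norm (k y))\<^sup>2"
    by (simp add: power2_eq_square power4_eq_xxxx algebra_simps)
  then have "(norm (k y))\<^sup>2 \<le> (K * norm y)\<^sup>2"
    by (rule mult_right_le_imp_le) (simp add: False)
  moreover have "0 \<le> K * norm y"
  proof -
    have "0 \<le> K * (norm (k y))\<^sup>2" using posR[OF kR[OF y]] upR[OF kR[OF y]] by linarith
    then have "0 \<le> K" using False by (simp add: zero_le_mult_iff)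
    then show ?thesis by simp
  qed
  ultimately show ?thesis by (rule power2_le_imp_le)
qed

lemma positive_op_norm_square_le:
  assumes k: "positive_op k" and bd: "\<And>w. norm (k w) \<le> K * norm w"
  shows "(norm (k x))\<^sup>2 \<le> K * Re (cinner x (k x))"
proof (cases "k x = 0")
  case True
  have "0 \<le> K" if "x \<noteq> 0"
  proof -
    have "0 \<le> K * norm x" using bd[of x] norm_ge_zero[of "k x"] by linarith
    then show ?thesis using that by (simp add: zero_le_mult_iff)
  qed
  then show ?thesis using True by (cases "x = 0") auto
next
  case False
  have k_nonneg: "\<And>w. 0 \<le> Re (cinner w (k w))" by (rule positive_op_nonneg[OF k])
  have "(norm (k x))^4 \<le> Re (cinner x (k x)) * Re (cinner (k x) (k (k x)))"
    by (rule positive_on_subspace_Cauchy_Schwarz[OF positive_op_selfadjoint[OF k] closed_csubspace_UNIV])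
      (simp_all add: k_nonneg)
  also have "Re (cinner (k x) (k (k x))) \<le> K * (norm (k x))\<^sup>2"
    using order_trans[OF Re_cinner_le mult_left_mono[OF bd norm_ge_zero]]
    by (simp add: power2_eq_square algebra_simps)
  then have "Re (cinner x (k x)) * Re (cinner (k x) (k (k x))) \<le> Re (cinner x (k x)) * (K * (norm (k x))\<^sup>2)"
    using k_nonneg by (rule mult_left_mono)
  finally have "(norm (k x))\<^sup>2 * (norm (k x))\<^sup>2 \<le> (K * Re (cinner x (k x))) * (norm (k x))\<^sup>2"
    by (simp add: power_mult[symmetric] algebra_simps)
  then show ?thesis
    by (rule mult_right_le_imp_le) (simp add: False)
qed

lemma loewner_le_norm_diff_square_le:
  assumes ab: "loewner_le a b" and a: "\<And>w. norm (a w) \<le> B * norm w" and b: "\<And>w. norm (b w) \<le> B * norm w"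
  shows "(norm (b x - a x))\<^sup>2 \<le> 2 * \<bar>B\<bar> * (Re (cinner x (b x)) - Re (cinner x (a x)))"
proof -
  have "norm (b w - a w) \<le> 2 * \<bar>B\<bar> * norm w" for w
    using norm_triangle_ineq4[of "b w" "a w"] a[of w] b[of w]
      mult_right_mono[OF abs_ge_self norm_ge_zero, of B w] by linarith
  from positive_op_norm_square_le[OF ab[unfolded loewner_le_def] this]
  show ?thesis by (simp add: cinner_diff_right)
qed

section \<open>Monotone convergence of self-adjoint operators\<close>

lemma pointwise_limit_clinear:
  fixes z :: "nat \<Rightarrow> 'a::complex_normed_vector \<Rightarrow> 'a"
  assumes lin: "\<And>n. clinear (z n)" and lim: "\<And>x. (\<lambda>n. z n x) \<longlonglongrightarrow> L x"
  shows "clinear L"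
proof -
  have "(\<lambda>n. z n (x + y)) \<longlonglongrightarrow> L x + L y" for x y
    using tendsto_add[OF lim[of x] lim[of y]] by (simp add: clinear_add[OF lin])
  moreover have "(\<lambda>n. z n (c *\<^sub>C x)) \<longlonglongrightarrow> c *\<^sub>C L x" for c x
    using bounded_clinear_tendsto[OF bounded_clinear_scaleC[OF bounded_clinear_ident] lim[of x]]
    by (simp add: clinear_scaleC[OF lin])
  ultimately show ?thesis
    unfolding clinear_def using lim LIMSEQ_unique by blast
qed

lemma pointwise_limit_norm_le:
  fixes z :: "nat \<Rightarrow> 'a::complex_normed_vector \<Rightarrow> 'a"
  assumes bd: "\<And>n. norm (z n x) \<le> B * norm x" and lim: "(\<lambda>n. z n x) \<longlonglongrightarrow> l"
  shows "norm l \<le> B * norm x"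
  using bd by (intro LIMSEQ_le_const2[OF tendsto_norm[OF lim]]) auto

lemma pointwise_limit_selfadjoint:
  fixes z :: "nat \<Rightarrow> 'a::complex_inner \<Rightarrow> 'a"
  assumes sa: "\<And>n. selfadjoint (z n)" and bd: "\<And>n x. norm (z n x) \<le> B * norm x"
    and lim: "\<And>x. (\<lambda>n. z n x) \<longlonglongrightarrow> L x"
  shows "selfadjoint L"
proof -
  have "clinear L" using pointwise_limit_clinear[OF selfadjoint_clinear[OF sa] lim] .
  moreover have "norm (L x) \<le> norm x * B" for x
    using pointwise_limit_norm_le[where z = z, OF bd lim[of x]] by (simp add: mult.commute)
  moreover have "cinner (L x) y = cinner x (L y)" for x y
  proof -
    have "(\<lambda>n. cinner (z n x) y) \<longlonglongrightarrow> cinner x (L y)"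
      using tendsto_cinner_right[OF lim[of y], of x] by (simp add: selfadjoint_cinner[OF sa])
    then show ?thesis using LIMSEQ_unique[OF tendsto_cinner_left[OF lim[of x], of y]] by simp
  qed
  ultimately show ?thesis by (auto simp: selfadjoint_def bounded_clinear_iff)
qed

lemma loewner_incseq_Cauchy:
  fixes z :: "nat \<Rightarrow> 'a::complex_inner \<Rightarrow> 'a"
  assumes bd: "\<And>n x. norm (z n x) \<le> B * norm x"
    and inc: "\<And>n. loewner_le (z n) (z (Suc n))"
  shows "Cauchy (\<lambda>n. z n x)"
proof (rule CauchyI)
  fix e :: real assume "e > 0"
  define r where "r n = Re (cinner x (z n x))" for n
  have mono: "loewner_le (z n) (z m)" if "n \<le> m" for n m
    using loewner_incseq_le[where z = z, OF inc that] .
  have "incseq r"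
  proof (rule incseq_SucI)
    fix n
    show "r n \<le> r (Suc n)"
      using positive_op_nonneg[OF inc[of n, unfolded loewner_le_def], of x]
      by (simp add: r_def cinner_diff_right)
  qed
  moreover have "r n \<le> B * (norm x)\<^sup>2" for n
    using order_trans[OF Re_cinner_le mult_left_mono[OF bd norm_ge_zero]]
    by (simp add: r_def power2_eq_square algebra_simps)
  ultimately obtain R where R: "r \<longlonglongrightarrow> R" and r_le: "\<And>n. r n \<le> R"
    using incseq_convergent by metis
  \<comment> \<open>the increments of \<open>z n x\<close> are controlled by those of the bounded increasing sequence \<open>r n\<close>\<close>
  have step: "(norm (z m x - z n x))\<^sup>2 \<le> 2 * \<bar>B\<bar> * (R - r n)" if "n \<le> m" for n m
    using loewner_le_norm_diff_square_le[OF mono[OF that] bd bd, of x]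
      mult_left_mono[OF r_le[of m], of "2 * \<bar>B\<bar>"] by (simp add: r_def algebra_simps)
  have "(\<lambda>n. 2 * \<bar>B\<bar> * (R - r n)) \<longlonglongrightarrow> 2 * \<bar>B\<bar> * (R - R)"
    by (intro tendsto_intros R)
  then have "(\<lambda>n. 2 * \<bar>B\<bar> * (R - r n)) \<longlonglongrightarrow> 0" by simp
  moreover have "(e / 2)\<^sup>2 > 0" using \<open>e > 0\<close> by simp
  ultimately have "\<forall>\<^sub>F n in sequentially. 2 * \<bar>B\<bar> * (R - r n) < (e / 2)\<^sup>2"
    by (rule order_tendstoD(2))
  then obtain N where N: "2 * \<bar>B\<bar> * (R - r N) < (e / 2)\<^sup>2"
    by (auto simp: eventually_sequentially)
  have near: "norm (z m x - z N x) < e / 2" if "m \<ge> N" for m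
    by (rule power_less_imp_less_base[OF order_le_less_trans[OF step[OF that] N]]) (use \<open>e > 0\<close> in simp)
  have "norm (z m x - z n x) < e" if "m \<ge> N" "n \<ge> N" for m n
    using norm_triangle_ineq4[of "z m x - z N x" "z n x - z N x"] near[OF that(1)] near[OF that(2)]
    by simp
  then show "\<exists>N. \<forall>m\<ge>N. \<forall>n\<ge>N. norm (z m x - z n x) < e" by blast
qed

theorem monotone_convergence_selfadjoint:
  fixes z :: "nat \<Rightarrow> 'a::chilbert_space \<Rightarrow> 'a"
  assumes sa: "\<And>n. selfadjoint (z n)" and bd: "\<And>n x. norm (z n x) \<le> B * norm x"
    and inc: "\<And>n. loewner_le (z n) (z (Suc n))"
  obtains L where "selfadjoint L" "\<And>x. (\<lambda>n. z n x) \<longlonglongrightarrow> L x" "\<And>x. norm (L x) \<le> B * norm x"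
    "\<And>n. loewner_le (z n) L"
proof
  define L where "L x = lim (\<lambda>n. z n x)" for x
  show lim: "(\<lambda>n. z n x) \<longlonglongrightarrow> L x" for x
    unfolding L_def using loewner_incseq_Cauchy[where z = z, OF bd inc]
    by (simp add: Cauchy_convergent_iff convergent_LIMSEQ_iff)
  show "selfadjoint L" by (rule pointwise_limit_selfadjoint[OF sa bd lim])
  show "norm (L x) \<le> B * norm x" for x by (rule pointwise_limit_norm_le[where z = z, OF bd lim])
  show "loewner_le (z n) L" for n
  proof -
    have "0 \<le> Re (cinner x (L x - z n x))" for x
    proof (rule LIMSEQ_le_const)
      show "(\<lambda>m. Re (cinner x (z m x - z n x))) \<longlonglongrightarrow> Re (cinner x (L x - z n x))"
        by (intro tendsto_Re tendsto_cinner_right tendsto_diff lim tendsto_const)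
      have "0 \<le> Re (cinner x (z m x - z n x))" if "m \<ge> n" for m
        using positive_op_nonneg[OF loewner_incseq_le[where z = z, OF inc that, unfolded loewner_le_def]]
        by simp
      then show "\<exists>N. \<forall>m\<ge>N. 0 \<le> Re (cinner x (z m x - z n x))" by blast
    qed
    then show ?thesis
      using selfadjoint_diff[OF \<open>selfadjoint L\<close> sa] by (simp add: loewner_le_def positive_op_def)
  qed
qed

section \<open>Square roots of positive operators\<close>

lemma funpow_clinear: "clinear (c::'a::complex_vector \<Rightarrow> 'a) \<Longrightarrow> clinear (c ^^ k)"
  by (induction k) (auto simp: clinear_def)

lemma funpow_selfadjoint: "selfadjoint c \<Longrightarrow> selfadjoint (c ^^ k)"
proof (induction k)
  case 0 then show ?case using selfadjoint_ident by (simp add: id_def)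
next
  case (Suc k)
  have "selfadjoint (\<lambda>x. c ((c ^^ k) x))"
    by (rule selfadjoint_compose_commuting[OF Suc.prems Suc.IH[OF Suc.prems]]) (simp add: funpow_swap1)
  then show ?case by (simp add: comp_def)
qed

lemma funpow_positive_op:
  assumes c: "positive_op c"
  shows "positive_op (c ^^ k)"
proof -
  have sa: "selfadjoint (c ^^ j)" for j using funpow_selfadjoint[OF positive_op_selfadjoint[OF c]] .
  have "0 \<le> Re (cinner x ((c ^^ k) x))" for x
  proof (cases "even k")
    case True
    then obtain j where k: "k = j + j" by (metis evenE mult_2)
    then have "cinner x ((c ^^ k) x) = cinner ((c ^^ j) x) ((c ^^ j) x)"
      using selfadjoint_cinner[OF sa, of j x "(c ^^ j) x"] by (simp add: funpow_add)
    then show ?thesis by (simp add: cinner_self)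
  next
    case False
    then obtain j where k: "k = j + (1 + j)" by (metis oddE add.commute add.left_commute mult_2)
    then have "cinner x ((c ^^ k) x) = cinner ((c ^^ j) x) (c ((c ^^ j) x))"
      using selfadjoint_cinner[OF sa, of j x "c ((c ^^ j) x)"] by (simp add: funpow_add funpow_swap1)
    then show ?thesis using positive_op_nonneg[OF c] by simp
  qed
  then show ?thesis using sa by (simp add: positive_op_def)
qed

lemma funpow_commute: "clinear s \<Longrightarrow> (\<And>x. s (c x) = c (s x)) \<Longrightarrow> s ((c ^^ k) x) = (c ^^ k) (s x)"
  by (induction k arbitrary: x) auto

inductive_set nonneg_poly :: "('a::complex_inner \<Rightarrow> 'a) \<Rightarrow> ('a \<Rightarrow> 'a) set" for c where
  nonneg_poly_zero: "(\<lambda>x. 0) \<in> nonneg_poly c"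
| nonneg_poly_add_monom: "p \<in> nonneg_poly c \<Longrightarrow> r \<ge> 0 \<Longrightarrow> (\<lambda>x. p x + r *\<^sub>R (c ^^ k) x) \<in> nonneg_poly c"

context
  fixes c :: "'a::chilbert_space \<Rightarrow> 'a"
  assumes c: "positive_op c"
begin

lemma nonneg_poly_positive_op: "p \<in> nonneg_poly c \<Longrightarrow> positive_op p"
proof (induction rule: nonneg_poly.induct)
  case (nonneg_poly_add_monom p r k)
  then show ?case using positive_op_add positive_op_scaleR funpow_positive_op[OF c] by blast
qed (rule positive_op_zero)

lemma nonneg_poly_clinear: "p \<in> nonneg_poly c \<Longrightarrow> clinear p"
  using nonneg_poly_positive_op positive_op_selfadjoint selfadjoint_clinear by blast

lemma nonneg_poly_add: "q \<in> nonneg_poly c \<Longrightarrow> p \<in> nonneg_poly c \<Longrightarrow> (\<lambda>x. p x + q x) \<in> nonneg_poly c"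
proof (induction rule: nonneg_poly.induct)
  case (nonneg_poly_add_monom q r k)
  from nonneg_poly.nonneg_poly_add_monom[OF nonneg_poly_add_monom.IH[OF nonneg_poly_add_monom.prems]
      nonneg_poly_add_monom.hyps(2)]
  show ?case by (simp add: add.assoc)
qed simp

lemma nonneg_poly_scaleR: "p \<in> nonneg_poly c \<Longrightarrow> s \<ge> 0 \<Longrightarrow> (\<lambda>x. s *\<^sub>R p x) \<in> nonneg_poly c"
proof (induction rule: nonneg_poly.induct)
  case nonneg_poly_zero then show ?case using nonneg_poly.nonneg_poly_zero by simp
next
  case (nonneg_poly_add_monom p r k)
  have "(\<lambda>x. s *\<^sub>R p x + (s * r) *\<^sub>R (c ^^ k) x) \<in> nonneg_poly c"
    using nonneg_poly.nonneg_poly_add_monom[OF nonneg_poly_add_monom.IH[OF nonneg_poly_add_monom.prems]]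
      nonneg_poly_add_monom.hyps(2) nonneg_poly_add_monom.prems by simp
  then show ?case by (simp add: scaleR_add_right)
qed

lemma nonneg_poly_monom: "r \<ge> 0 \<Longrightarrow> (\<lambda>x. r *\<^sub>R (c ^^ k) x) \<in> nonneg_poly c"
  using nonneg_poly.nonneg_poly_add_monom[OF nonneg_poly.nonneg_poly_zero, of r k] by simp

lemma nonneg_poly_self: "c \<in> nonneg_poly c"
  using nonneg_poly_monom[of 1 1] by simp

lemma nonneg_poly_compose:
  assumes p: "p \<in> nonneg_poly c" and q: "q \<in> nonneg_poly c"
  shows "(\<lambda>x. p (q x)) \<in> nonneg_poly c"
  using p
proof (induction rule: nonneg_poly.induct)
  case nonneg_poly_zero show ?case by (rule nonneg_poly.nonneg_poly_zero)
next
  case (nonneg_poly_add_monom p r k)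
  have "(\<lambda>x. (c ^^ k) (q x)) \<in> nonneg_poly c"
    using q
  proof (induction rule: nonneg_poly.induct)
    case nonneg_poly_zero
    then show ?case
      using clinear_zero[OF funpow_clinear[OF selfadjoint_clinear[OF positive_op_selfadjoint[OF c]]]]
        nonneg_poly.nonneg_poly_zero by simp
  next
    case (nonneg_poly_add_monom q r' j)
    then show ?case
      using nonneg_poly_add[OF nonneg_poly_monom[OF nonneg_poly_add_monom.hyps(2), of "k + j"]]
        funpow_clinear[OF selfadjoint_clinear[OF positive_op_selfadjoint[OF c]], of k]
      by (simp add: clinear_add clinear_scaleR funpow_add)
  qed
  from nonneg_poly_add[OF nonneg_poly_scaleR[OF this nonneg_poly_add_monom.hyps(2)] nonneg_poly_add_monom.IH]
  show ?case by simp
qed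

lemma nonneg_poly_commute:
  "p \<in> nonneg_poly c \<Longrightarrow> clinear s \<Longrightarrow> (\<And>x. s (c x) = c (s x)) \<Longrightarrow> s (p x) = p (s x)"
  by (induction arbitrary: x rule: nonneg_poly.induct) (simp_all add: clinear_zero clinear_add clinear_scaleR funpow_commute)

lemma nonneg_poly_commute_nonneg_poly:
  assumes "p \<in> nonneg_poly c" "q \<in> nonneg_poly c"
  shows "p (q x) = q (p x)"
proof -
  have "q (c x) = c (q x)" for x
    using nonneg_poly_commute[OF \<open>q \<in> nonneg_poly c\<close> selfadjoint_clinear[OF positive_op_selfadjoint[OF c]]] by simp
  then show ?thesis using nonneg_poly_commute[OF assms(1) nonneg_poly_clinear[OF assms(2)]] by simp
qed

end

text \<open>For \<open>0 \<le> c \<le> 1\<close>, the iteration \<open>z\<^sub>0 = 0\<close>, \<open>z\<^sub>n\<^sub>+\<^sub>1 = (c + z\<^sub>n\<^sup>2) / 2\<close> increases to the solution \<open>L\<close> of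
  \<open>L = (c + L\<^sup>2) / 2\<close>, so that \<open>(1 - L)\<^sup>2 = 1 - c\<close>.\<close>

primrec sqrt_iter :: "('a::complex_vector \<Rightarrow> 'a) \<Rightarrow> nat \<Rightarrow> 'a \<Rightarrow> 'a" where
  "sqrt_iter c 0 = (\<lambda>x. 0)"
| "sqrt_iter c (Suc n) = (\<lambda>x. (1/2) *\<^sub>R (c x + sqrt_iter c n (sqrt_iter c n x)))"

lemma sqrt_iter_nonneg_poly: "positive_op (c::'a::chilbert_space \<Rightarrow> 'a) \<Longrightarrow> sqrt_iter c n \<in> nonneg_poly c"
proof (induction n)
  case 0 then show ?case using nonneg_poly.nonneg_poly_zero by simp
next
  case (Suc n)
  have "(\<lambda>x. c x + sqrt_iter c n (sqrt_iter c n x)) \<in> nonneg_poly c"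
    using nonneg_poly_add[OF Suc.prems nonneg_poly_compose[OF Suc.prems Suc.IH[OF Suc.prems] Suc.IH[OF Suc.prems]]
        nonneg_poly_self[OF Suc.prems]] .
  from nonneg_poly_scaleR[OF Suc.prems this, of "1/2"] show ?case by simp
qed

lemma norm_sqrt_iter_le:
  assumes "\<And>x. norm (c x) \<le> norm x"
  shows "norm (sqrt_iter c n x) \<le> norm (x::'a::complex_normed_vector)"
proof (induction n arbitrary: x)
  case (Suc n)
  have "norm (c x + sqrt_iter c n (sqrt_iter c n x)) \<le> norm x + norm x"
    using norm_triangle_ineq[of "c x" "sqrt_iter c n (sqrt_iter c n x)"] assms[of x]
      Suc.IH[of "sqrt_iter c n x"] Suc.IH[of x] by linarith
  then show ?case by simp
qed simp

lemma sqrt_iter_step_nonneg_poly: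
  assumes c: "positive_op (c::'a::chilbert_space \<Rightarrow> 'a)"
  shows "(\<lambda>x. sqrt_iter c (Suc n) x - sqrt_iter c n x) \<in> nonneg_poly c"
proof (induction n)
  case 0 then show ?case using nonneg_poly_scaleR[OF c nonneg_poly_self[OF c], of "1/2"] by simp
next
  case (Suc n)
  define z1 z0 where "z1 = sqrt_iter c (Suc n)" and "z0 = sqrt_iter c n"
  define D where "D = (\<lambda>x. z1 x - z0 x)"
  have D: "D \<in> nonneg_poly c" using Suc.IH by (simp only: D_def z1_def z0_def)
  have z: "z1 \<in> nonneg_poly c" "z0 \<in> nonneg_poly c"
    unfolding z1_def z0_def using sqrt_iter_nonneg_poly[OF c] by blast+
  \<comment> \<open>\<open>z\<^sub>n\<^sub>+\<^sub>2 - z\<^sub>n\<^sub>+\<^sub>1 = (z\<^sub>n\<^sub>+\<^sub>1 - z\<^sub>n) (z\<^sub>n\<^sub>+\<^sub>1 + z\<^sub>n) / 2\<close>, as the \<open>z\<^sub>n\<close> commute\<close>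
  have "sqrt_iter c (Suc (Suc n)) x - sqrt_iter c (Suc n) x = (1/2) *\<^sub>R D (z1 x + z0 x)" for x
  proof -
    have "D (z1 x + z0 x) = z1 (z1 x) - z0 (z0 x)"
      using nonneg_poly_commute_nonneg_poly[OF c z, of x]
      by (simp add: D_def clinear_add[OF nonneg_poly_clinear[OF c z(1)]]
          clinear_add[OF nonneg_poly_clinear[OF c z(2)]] algebra_simps)
    then show ?thesis by (simp add: z1_def z0_def scaleR_diff_right[symmetric])
  qed
  moreover have "(\<lambda>x. D (z1 x + z0 x)) \<in> nonneg_poly c"
    using nonneg_poly_compose[OF c D nonneg_poly_add[OF c z(2) z(1)]] .
  ultimately show ?case using nonneg_poly_scaleR[OF c, of _ "1/2"] by simp
qed

lemma sqrt_iter_limit_fixpoint: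
  fixes c :: "'a::complex_normed_vector \<Rightarrow> 'a"
  assumes lin: "\<And>n. clinear (sqrt_iter c n)" and contr: "\<And>n x. norm (sqrt_iter c n x) \<le> norm x"
    and lim: "\<And>x. (\<lambda>n. sqrt_iter c n x) \<longlonglongrightarrow> L x"
  shows "L x = (1/2) *\<^sub>R (c x + L (L x))"
proof -
  have "(\<lambda>n. sqrt_iter c n (sqrt_iter c n x) - sqrt_iter c n (L x)) \<longlonglongrightarrow> 0"
  proof (rule tendsto_norm_zero_cancel, rule Lim_null_comparison)
    show "\<forall>\<^sub>F n in sequentially.
        norm (norm (sqrt_iter c n (sqrt_iter c n x) - sqrt_iter c n (L x))) \<le> norm (sqrt_iter c n x - L x)"
      using contr by (simp add: clinear_diff[OF lin, symmetric])
    show "(\<lambda>n. norm (sqrt_iter c n x - L x)) \<longlonglongrightarrow> 0"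
      using lim[of x] by (intro tendsto_norm_zero) (simp add: LIM_zero)
  qed
  from tendsto_add[OF this lim[of "L x"]]
  have "(\<lambda>n. sqrt_iter c (Suc n) x) \<longlonglongrightarrow> (1/2) *\<^sub>R (c x + L (L x))"
    by (simp add: tendsto_intros)
  moreover have "(\<lambda>n. sqrt_iter c (Suc n) x) \<longlonglongrightarrow> L x" using lim[of x] by (rule LIMSEQ_Suc)
  ultimately show ?thesis using LIMSEQ_unique by blast
qed

lemma positive_op_ident_minus:
  assumes a: "selfadjoint a" and a_le: "\<And>x. norm (a x) \<le> norm x"
  shows "positive_op (\<lambda>x. x - a x)"
proof -
  have "Re (cinner x (a x)) \<le> (norm x)\<^sup>2" for x
    using order_trans[OF Re_cinner_le mult_left_mono[OF a_le norm_ge_zero]] by (simp add: power2_eq_square)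
  then show ?thesis
    using selfadjoint_diff[OF selfadjoint_ident a] by (simp add: positive_op_def cinner_diff_right cinner_self)
qed

lemma positive_op_sqrt_contraction:
  fixes a :: "'a::chilbert_space \<Rightarrow> 'a"
  assumes a: "positive_op a" and a_le: "\<And>x. norm (a x) \<le> norm x"
  obtains r where "positive_op r" "\<And>x. r (r x) = a x"
    "\<And>s x. bounded_clinear s \<Longrightarrow> (\<And>y. s (a y) = a (s y)) \<Longrightarrow> s (r x) = r (s x)"
proof -
  define c where "c = (\<lambda>x. x - a x)"
  have c: "positive_op c"
    unfolding c_def by (rule positive_op_ident_minus[OF positive_op_selfadjoint[OF a] a_le])
  have "norm (c x) \<le> 1 * norm x" for x
  proof (rule norm_le_of_numerical_range_le[OF positive_op_selfadjoint[OF c] closed_csubspace_UNIV])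
    show "Re (cinner w (c w)) \<le> 1 * (norm w)\<^sup>2" for w
      using positive_op_nonneg[OF a, of w] by (simp add: c_def cinner_diff_right cinner_self)
  qed (simp_all add: positive_op_nonneg[OF c])
  then have z_le: "norm (sqrt_iter c n x) \<le> 1 * norm x" for n x
    using norm_sqrt_iter_le[of c] by simp
  have z: "sqrt_iter c n \<in> nonneg_poly c" for n by (rule sqrt_iter_nonneg_poly[OF c])
  obtain L where L: "selfadjoint L" "\<And>x. (\<lambda>n. sqrt_iter c n x) \<longlonglongrightarrow> L x"
    "\<And>x. norm (L x) \<le> 1 * norm x"
    using monotone_convergence_selfadjoint[of "sqrt_iter c" 1]
      nonneg_poly_positive_op[OF c z] positive_op_selfadjoint z_le
      nonneg_poly_positive_op[OF c sqrt_iter_step_nonneg_poly[OF c]]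
    by (metis loewner_le_def)
  have fix_L: "L x = (1/2) *\<^sub>R (c x + L (L x))" for x
    by (rule sqrt_iter_limit_fixpoint[OF nonneg_poly_clinear[OF c z] _ L(2)]) (use z_le in simp)
  show ?thesis
  proof
    show "positive_op (\<lambda>x. x - L x)"
      using positive_op_ident_minus[OF L(1)] L(3) by simp
    have "L (L x) = 2 *\<^sub>R L x - c x" for x
      using arg_cong[OF fix_L[of x], of "scaleR 2"] by (simp add: algebra_simps)
    then show "x - L x - L (x - L x) = a x" for x
      by (simp add: clinear_diff[OF selfadjoint_clinear[OF L(1)]] c_def algebra_simps scaleR_2)
    fix s x assume s: "bounded_clinear s" and sa: "\<And>y. s (a y) = a (s y)"
    have sl: "clinear s" using bounded_clinear_clinear[OF s] .
    have "s (c y) = c (s y)" for y using sa by (simp add: c_def clinear_diff[OF sl])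
    then have "s (sqrt_iter c n y) = sqrt_iter c n (s y)" for n y
      using nonneg_poly_commute[OF c z sl] by blast
    then have "(\<lambda>n. sqrt_iter c n (s x)) \<longlonglongrightarrow> s (L x)"
      using bounded_clinear_tendsto[OF s L(2)] by simp
    then have "s (L x) = L (s x)" using L(2)[of "s x"] LIMSEQ_unique by blast
    then show "s (x - L x) = s x - L (s x)" by (simp add: clinear_diff[OF sl])
  qed
qed

lemma positive_op_sqrt:
  fixes a :: "'a::chilbert_space \<Rightarrow> 'a"
  assumes a: "positive_op a"
  obtains r where "positive_op r" "\<And>x. r (r x) = a x"
    "\<And>s x. bounded_clinear s \<Longrightarrow> (\<And>y. s (a y) = a (s y)) \<Longrightarrow> s (r x) = r (s x)"
proof -
  obtain K where K: "K > 0" "\<And>x. norm (a x) \<le> K * norm x"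
    using bounded_clinear_pos_bound[OF selfadjoint_bounded_clinear[OF positive_op_selfadjoint[OF a]]] by blast
  have "norm ((1/K) *\<^sub>R a x) \<le> norm x" for x
    using K(1) K(2)[of x] by (simp add: field_simps)
  then obtain r where r: "positive_op r" "\<And>x. r (r x) = (1/K) *\<^sub>R a x"
    "\<And>s x. bounded_clinear s \<Longrightarrow> (\<And>y. s ((1/K) *\<^sub>R a y) = (1/K) *\<^sub>R a (s y)) \<Longrightarrow> s (r x) = r (s x)"
    using positive_op_sqrt_contraction[of "\<lambda>x. (1/K) *\<^sub>R a x"] positive_op_scaleR[OF a] K(1)
    by (metis less_eq_real_def zero_less_divide_1_iff)
  have r_lin: "clinear r" by (rule selfadjoint_clinear[OF positive_op_selfadjoint[OF r(1)]])
  show ?thesis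
  proof
    show "positive_op (\<lambda>x. sqrt K *\<^sub>R r x)" using positive_op_scaleR[OF r(1)] K(1) by simp
    show "sqrt K *\<^sub>R r (sqrt K *\<^sub>R r x) = a x" for x
      using K(1) by (simp add: clinear_scaleR[OF r_lin] r(2))
    fix s x assume s: "bounded_clinear s" and sa: "\<And>y. s (a y) = a (s y)"
    have sl: "clinear s" using bounded_clinear_clinear[OF s] .
    have "s (r x) = r (s x)" by (rule r(3)[OF s]) (simp add: sa clinear_scaleR[OF sl])
    then show "s (sqrt K *\<^sub>R r x) = sqrt K *\<^sub>R r (s x)" by (simp add: clinear_scaleR[OF sl])
  qed
qed

definition op_abs :: "('a::chilbert_space \<Rightarrow> 'a) \<Rightarrow> ('a \<Rightarrow> 'a)" where
  "op_abs b = (SOME r. positive_op r \<and> (\<forall>x. r (r x) = b (b x)) \<and>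
    (\<forall>s x. bounded_clinear s \<and> (\<forall>y. s (b y) = b (s y)) \<longrightarrow> s (r x) = r (s x)))"

lemma
  assumes b: "selfadjoint b"
  shows positive_op_abs: "positive_op (op_abs b)"
    and op_abs_square: "op_abs b (op_abs b x) = b (b x)"
    and op_abs_commute: "bounded_clinear s \<Longrightarrow> (\<And>y. s (b y) = b (s y)) \<Longrightarrow> s (op_abs b x) = op_abs b (s x)"
proof -
  obtain r where "positive_op r" "\<And>x. r (r x) = b (b x)"
    "\<And>s x. bounded_clinear s \<Longrightarrow> (\<And>y. s (b (b y)) = b (b (s y))) \<Longrightarrow> s (r x) = r (s x)"
    using positive_op_sqrt[OF positive_op_square[OF b]] by blast
  then have "\<exists>r. positive_op r \<and> (\<forall>x. r (r x) = b (b x)) \<and>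
      (\<forall>s x. bounded_clinear s \<and> (\<forall>y. s (b y) = b (s y)) \<longrightarrow> s (r x) = r (s x))"
    by (intro exI[of _ r]) auto
  from someI_ex[OF this, folded op_abs_def]
  show "positive_op (op_abs b)" "op_abs b (op_abs b x) = b (b x)"
    "bounded_clinear s \<Longrightarrow> (\<And>y. s (b y) = b (s y)) \<Longrightarrow> s (op_abs b x) = op_abs b (s x)"
    by auto
qed

section \<open>Spectral subspaces\<close>

text \<open>\<open>spectral_subspace h t\<close> is the kernel of \<open>|h - t| + (h - t)\<close>, twice the positive part of \<open>h - t\<close>:
  the range of the spectral projection of \<open>h\<close> for \<open>(-\<infinity>, t]\<close>.\<close>

definition spectral_subspace :: "('a::chilbert_space \<Rightarrow> 'a) \<Rightarrow> real \<Rightarrow> 'a set" where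
  "spectral_subspace h t = {x. op_abs (\<lambda>y. h y - t *\<^sub>R y) x + (h x - t *\<^sub>R x) = 0}"

context
  fixes h :: "'a::chilbert_space \<Rightarrow> 'a"
  assumes h: "selfadjoint h"
begin

lemma selfadjoint_shift: "selfadjoint (\<lambda>y. h y - t *\<^sub>R y)"
  by (rule selfadjoint_diff[OF h selfadjoint_scaleR[OF selfadjoint_ident]])

lemma cinner_shift: "Re (cinner y (h y - t *\<^sub>R y)) = Re (cinner y (h y)) - t * (norm y)\<^sup>2"
  by (simp add: cinner_diff_right cinner_scaleR_right cinner_self)

lemma closed_csubspace_spectral_subspace: "closed_csubspace (spectral_subspace h t)"
  using closed_csubspace_kernel[OF bounded_clinear_add[OF
      selfadjoint_bounded_clinear[OF positive_op_selfadjoint[OF positive_op_abs[OF selfadjoint_shift]]]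
      selfadjoint_bounded_clinear[OF selfadjoint_shift]]]
  by (simp add: spectral_subspace_def)

lemma spectral_subspace_le:
  assumes "y \<in> spectral_subspace h t"
  shows "Re (cinner y (h y)) \<le> t * (norm y)\<^sup>2"
proof -
  have "h y - t *\<^sub>R y = - op_abs (\<lambda>y. h y - t *\<^sub>R y) y"
    using assms by (simp add: spectral_subspace_def eq_neg_iff_add_eq_0 add.commute)
  then show ?thesis
    using positive_op_nonneg[OF positive_op_abs[OF selfadjoint_shift], of y t] cinner_shift[of y t]
    by (simp add: cinner_minus_right)
qed

lemma spectral_subspace_orth_ge:
  assumes y: "y \<in> orth (spectral_subspace h t)"
  shows "t * (norm y)\<^sup>2 \<le> Re (cinner y (h y))"
proof -
  let ?b = "\<lambda>y. h y - t *\<^sub>R y" and ?r = "op_abs (\<lambda>y. h y - t *\<^sub>R y)"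
  have r: "selfadjoint ?r" by (rule positive_op_selfadjoint[OF positive_op_abs[OF selfadjoint_shift]])
  have b_lin: "clinear ?b" and r_lin: "clinear ?r"
    using selfadjoint_clinear selfadjoint_shift r by blast+
  have "?b (?r x) = ?r (?b x)" for x
    by (rule op_abs_commute[OF selfadjoint_shift[of t] selfadjoint_bounded_clinear[OF selfadjoint_shift[of t]]])
      simp
  \<comment> \<open>\<open>|b| - b\<close> maps into the kernel of \<open>|b| + b\<close>, since \<open>(|b| + b)(|b| - b) = |b|\<^sup>2 - b\<^sup>2 = 0\<close>\<close>
  then have "?r x - ?b x \<in> spectral_subspace h t" for x
    using op_abs_square[OF selfadjoint_shift[of t], of x]
    by (simp add: spectral_subspace_def clinear_diff[OF r_lin] clinear_diff[OF b_lin])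
  then have "cinner (?r x - ?b x) y = 0" for x using y by (simp add: orth_def)
  moreover have "cinner (?r x - ?b x) y = cinner x (?r y - ?b y)" for x
    using selfadjoint_cinner[OF selfadjoint_diff[OF r selfadjoint_shift[of t]], of x y] by simp
  ultimately have "cinner x (?r y - ?b y) = 0" for x by simp
  then have "?b y = ?r y" using cinner_self_eq_zero[of "?r y - ?b y"] by simp
  then show ?thesis
    using positive_op_nonneg[OF positive_op_abs[OF selfadjoint_shift[of t]], of y] cinner_shift[of y t] by simp
qed

lemma spectral_subspace_invariant:
  assumes s: "bounded_clinear s" and sh: "\<And>x. s (h x) = h (s x)" and x: "x \<in> spectral_subspace h t"
  shows "s x \<in> spectral_subspace h t"
proof -
  let ?b = "\<lambda>y. h y - t *\<^sub>R y"
  have sl: "clinear s" using bounded_clinear_clinear[OF s] .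
  have sb: "s (?b y) = ?b (s y)" for y
    by (simp add: clinear_diff[OF sl] clinear_scaleR[OF sl] sh)
  have sr: "s (op_abs ?b y) = op_abs ?b (s y)" for y
    by (rule op_abs_commute[OF selfadjoint_shift[of t] s]) (rule sb)
  have "s (op_abs ?b x + ?b x) = 0"
    using x clinear_zero[OF sl] by (simp add: spectral_subspace_def)
  then have "op_abs ?b (s x) + ?b (s x) = 0"
    by (simp only: clinear_add[OF sl] sb sr)
  then show ?thesis by (simp add: spectral_subspace_def)
qed

lemma spectral_subspace_h_invariant: "x \<in> spectral_subspace h t \<Longrightarrow> h x \<in> spectral_subspace h t"
  by (rule spectral_subspace_invariant[OF selfadjoint_bounded_clinear[OF h]]) simp

lemma spectral_subspace_mono:
  assumes "s \<le> t" and y: "y \<in> spectral_subspace h s"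
  shows "y \<in> spectral_subspace h t"
proof -
  let ?P = "proj (spectral_subspace h t)" and ?u = "y - proj (spectral_subspace h t) y"
  have Nt: "closed_csubspace (spectral_subspace h t)" by (rule closed_csubspace_spectral_subspace)
  have "?P y \<in> spectral_subspace h s"
    by (rule spectral_subspace_invariant[OF bounded_clinear_proj[OF Nt] _ y])
      (rule proj_commute_selfadjoint[OF Nt h spectral_subspace_h_invariant])
  \<comment> \<open>\<open>?u\<close> lies both below \<open>s\<close> and above \<open>t\<close>\<close>
  then have "Re (cinner ?u (h ?u)) \<le> s * (norm ?u)\<^sup>2"
    using closed_csubspace_diff[OF closed_csubspace_spectral_subspace y] spectral_subspace_le by blast
  moreover have "t * (norm ?u)\<^sup>2 \<le> Re (cinner ?u (h ?u))"
    by (rule spectral_subspace_orth_ge[OF proj_residual_orth[OF Nt]])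
  ultimately have "(t - s) * (norm ?u)\<^sup>2 \<le> 0" by (simp add: left_diff_distrib)
  then have "?u = 0 \<or> s = t" using \<open>s \<le> t\<close> by (auto simp: mult_le_0_iff)
  then show ?thesis
  proof
    assume "?u = 0"
    then show ?thesis using proj_in[OF Nt, of y] by simp
  qed (use y in simp)
qed

lemma proj_spectral_subspace_orth:
  assumes "a \<le> m" and y: "y \<in> orth (spectral_subspace h a)"
  shows "proj (spectral_subspace h m) y \<in> orth (spectral_subspace h a)"
proof -
  have N: "closed_csubspace (spectral_subspace h m)" by (rule closed_csubspace_spectral_subspace)
  have "cinner n (proj (spectral_subspace h m) y) = 0" if "n \<in> spectral_subspace h a" for n
  proof -
    have "cinner n (proj (spectral_subspace h m) y) = cinner (proj (spectral_subspace h m) n) y"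
      by (simp add: proj_selfadjoint_cinner[OF N])
    also have "proj (spectral_subspace h m) n = n"
      by (rule proj_id[OF N spectral_subspace_mono[OF \<open>a \<le> m\<close> that]])
    finally show ?thesis using y that by (simp add: orth_def)
  qed
  then show ?thesis by (simp add: orth_def)
qed

lemma proj_spectral_subspace_residual:
  assumes "m \<le> b" and y: "y \<in> spectral_subspace h b"
  shows "y - proj (spectral_subspace h m) y \<in> spectral_subspace h b"
  using closed_csubspace_diff[OF closed_csubspace_spectral_subspace y
      spectral_subspace_mono[OF \<open>m \<le> b\<close> proj_in[OF closed_csubspace_spectral_subspace]]] .

lemma spectral_subspace_below_bound:
  assumes K: "\<And>x. norm (h x) \<le> K * norm x" and "t < - K"
  shows "spectral_subspace h t = {0}"
proof -
  have "y = 0" if y: "y \<in> spectral_subspace h t" for y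
  proof -
    have "- Re (cinner y (h y)) \<le> norm y * norm (h y)"
      using norm_cinner_le[of y "h y"] abs_Re_le_cmod[of "cinner y (h y)"] by linarith
    also have "\<dots> \<le> K * (norm y)\<^sup>2"
      using mult_left_mono[OF K norm_ge_zero] by (simp add: power2_eq_square algebra_simps)
    finally have "(- K - t) * (norm y)\<^sup>2 \<le> 0"
      using spectral_subspace_le[OF y] by (simp add: algebra_simps)
    then show ?thesis using \<open>t < - K\<close> by (simp add: mult_le_0_iff)
  qed
  then show ?thesis using closed_csubspace_zero[OF closed_csubspace_spectral_subspace] by blast
qed

lemma spectral_subspace_above_bound:
  assumes K: "\<And>x. norm (h x) \<le> K * norm x" and "K < t"
  shows "spectral_subspace h t = UNIV"
proof -
  have N: "closed_csubspace (spectral_subspace h t)" by (rule closed_csubspace_spectral_subspace)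
  have "y - proj (spectral_subspace h t) y = 0" (is "?u = 0") for y
  proof -
    have "Re (cinner ?u (h ?u)) \<le> K * (norm ?u)\<^sup>2"
      using order_trans[OF Re_cinner_le mult_left_mono[OF K norm_ge_zero]]
      by (simp add: power2_eq_square algebra_simps)
    with spectral_subspace_orth_ge[OF proj_residual_orth[OF N, of y]]
    have "(t - K) * (norm ?u)\<^sup>2 \<le> 0" by (simp add: left_diff_distrib)
    then show ?thesis using \<open>K < t\<close> by (simp add: mult_le_0_iff)
  qed
  then have "y \<in> spectral_subspace h t" for y using proj_in[OF N, of y] by simp
  then show ?thesis by blast
qed

end

section \<open>Subspaces reducing the spectral subspaces of an operator\<close>

lemma proj_reducing_invariant:
  fixes M N :: "'a::chilbert_space set"
  assumes M: "closed_csubspace M" and N: "closed_csubspace N"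
    and MN: "\<And>x. x \<in> M \<Longrightarrow> proj N x \<in> M"
  shows "z \<in> N \<Longrightarrow> proj M z \<in> N" and "z \<in> orth N \<Longrightarrow> proj M z \<in> orth N"
proof -
  have comm: "proj M (proj N x) = proj N (proj M x)" for x
    by (rule proj_commute_selfadjoint[OF M selfadjoint_proj[OF N] MN])
  show "proj M z \<in> N" if "z \<in> N"
    using comm[of z] proj_id[OF N that] proj_in[OF N, of "proj M z"] by simp
  show "proj M z \<in> orth N" if "z \<in> orth N"
    using comm[of z] that clinear_zero[OF bounded_clinear_clinear[OF bounded_clinear_proj[OF M]]]
    by (simp add: proj_eq_0_iff[OF N, symmetric])
qed

context
  fixes h :: "'a::chilbert_space \<Rightarrow> 'a" and M :: "'a set"
  assumes h: "selfadjoint h" and M: "closed_csubspace M"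
begin

text \<open>The defect \<open>h y - proj M (h y)\<close> of \<open>y \<in> M\<close> is small when \<open>y\<close> lies in a thin spectral band
  \<open>(a, b]\<close> of \<open>h\<close>, because there \<open>h\<close> is close to the scalar \<open>a\<close>.\<close>

lemma defect_on_spectral_band_le:
  assumes "b \<le> a + d" and y: "y \<in> M" "y \<in> spectral_subspace h b" "y \<in> orth (spectral_subspace h a)"
  shows "norm (h y - proj M (h y)) \<le> d * norm y"
proof -
  define R where "R = spectral_subspace h b \<inter> orth (spectral_subspace h a)"
  define k where "k = (\<lambda>y. h y - a *\<^sub>R y)"
  have R: "closed_csubspace R"
    unfolding R_def by (rule closed_csubspace_Int[OF closed_csubspace_spectral_subspace[OF h] closed_csubspace_orth])
  have "h w \<in> R" if "w \<in> R" for w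
    using that spectral_subspace_h_invariant[OF h]
      selfadjoint_orth_invariant[OF h spectral_subspace_h_invariant[OF h]] by (auto simp: R_def)
  then have kR: "k w \<in> R" if "w \<in> R" for w
    using that closed_csubspace_diff[OF R] closed_csubspace_scaleR[OF R] by (simp add: k_def)
  have "norm (k y) \<le> d * norm y"
  proof (rule norm_le_of_numerical_range_le[OF _ R kR])
    show "selfadjoint k" unfolding k_def by (rule selfadjoint_shift[OF h])
    show "0 \<le> Re (cinner w (k w))" if "w \<in> R" for w
      using that spectral_subspace_orth_ge[OF h] cinner_shift[OF h] by (simp add: R_def k_def)
    show "Re (cinner w (k w)) \<le> d * (norm w)\<^sup>2" if "w \<in> R" for w
    proof -
      have "Re (cinner w (k w)) \<le> (b - a) * (norm w)\<^sup>2"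
        using that spectral_subspace_le[OF h] cinner_shift[OF h]
        by (simp add: R_def k_def left_diff_distrib)
      also have "\<dots> \<le> d * (norm w)\<^sup>2" using \<open>b \<le> a + d\<close> by (intro mult_right_mono) auto
      finally show ?thesis .
    qed
    show "y \<in> R" using y by (simp add: R_def)
  qed
  moreover have "h y - proj M (h y) = k y - proj M (k y)"
    using proj_id[OF M y(1)] by (simp add: k_def clinear_diff[OF bounded_clinear_clinear[OF bounded_clinear_proj[OF M]]]
      clinear_scaleR[OF bounded_clinear_clinear[OF bounded_clinear_proj[OF M]]])
  ultimately show ?thesis using norm_proj_residual_le[OF M, of "k y"] by simp
qed

lemma defect_on_spectral_band_split:
  assumes red: "\<And>t x. x \<in> M \<Longrightarrow> proj (spectral_subspace h t) x \<in> M"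
    and "a \<le> m" "m \<le> b" "d \<ge> 0"
    and lower: "\<And>y. y \<in> M \<Longrightarrow> y \<in> spectral_subspace h m \<Longrightarrow> y \<in> orth (spectral_subspace h a)
        \<Longrightarrow> norm (h y - proj M (h y)) \<le> d * norm y"
    and upper: "\<And>y. y \<in> M \<Longrightarrow> y \<in> spectral_subspace h b \<Longrightarrow> y \<in> orth (spectral_subspace h m)
        \<Longrightarrow> norm (h y - proj M (h y)) \<le> d * norm y"
    and y: "y \<in> M" "y \<in> spectral_subspace h b" "y \<in> orth (spectral_subspace h a)"
  shows "norm (h y - proj M (h y)) \<le> d * norm y"
proof -
  let ?N = "spectral_subspace h" and ?Q = "proj M"
  have N: "closed_csubspace (?N t)" for t by (rule closed_csubspace_spectral_subspace[OF h])
  have Q: "clinear ?Q" by (rule bounded_clinear_clinear[OF bounded_clinear_proj[OF M]])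
  define y1 y2 where "y1 = proj (?N m) y" and "y2 = y - proj (?N m) y"
  have y1: "y1 \<in> M" "y1 \<in> ?N m" "y1 \<in> orth (?N a)"
    unfolding y1_def using red[OF y(1)] proj_in[OF N] proj_spectral_subspace_orth[OF h \<open>a \<le> m\<close> y(3)]
    by blast+
  have y2: "y2 \<in> M" "y2 \<in> ?N b" "y2 \<in> orth (?N m)"
    unfolding y2_def using closed_csubspace_diff[OF M y(1) y1(1)[unfolded y1_def]]
      proj_spectral_subspace_residual[OF h \<open>m \<le> b\<close> y(2)] proj_residual_orth[OF N] by blast+
  \<comment> \<open>both the pieces of \<open>y\<close> and the pieces of its defect are orthogonal across \<open>m\<close>\<close>
  define v1 v2 where "v1 = h y1 - ?Q (h y1)" and "v2 = h y2 - ?Q (h y2)"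
  have "h y1 \<in> ?N m" by (rule spectral_subspace_h_invariant[OF h y1(2)])
  then have "v1 \<in> ?N m"
    unfolding v1_def by (intro closed_csubspace_diff[OF N] proj_reducing_invariant(1)[OF M N red])
  moreover have "h y2 \<in> orth (?N m)"
    by (rule selfadjoint_orth_invariant[OF h spectral_subspace_h_invariant[OF h] y2(3)])
  then have "v2 \<in> orth (?N m)"
    unfolding v2_def by (intro closed_csubspace_diff[OF closed_csubspace_orth] proj_reducing_invariant(2)[OF M N red])
  ultimately have "(norm (v1 + v2))\<^sup>2 = (norm v1)\<^sup>2 + (norm v2)\<^sup>2"
    by (intro cinner_Pythagorean) (simp add: orth_def)
  also have "\<dots> \<le> (d * norm y1)\<^sup>2 + (d * norm y2)\<^sup>2"
    using lower[OF y1] upper[OF y2] by (intro add_mono power_mono) (simp_all add: v1_def v2_def)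
  also have "\<dots> = d\<^sup>2 * (norm (y1 + y2))\<^sup>2"
  proof -
    have "cinner y1 y2 = 0" using y1(2) y2(3) by (simp add: orth_def)
    then show ?thesis by (simp add: cinner_Pythagorean power_mult_distrib distrib_left)
  qed
  also have "y1 + y2 = y" by (simp add: y1_def y2_def)
  finally have "(norm (v1 + v2))\<^sup>2 \<le> (d * norm y)\<^sup>2"
    by (simp add: power_mult_distrib)
  moreover have "h y - ?Q (h y) = v1 + v2"
    by (simp add: v1_def v2_def y1_def y2_def clinear_diff[OF selfadjoint_clinear[OF h]] clinear_diff[OF Q])
  ultimately show ?thesis
    using power2_le_imp_le[of "norm (v1 + v2)" "d * norm y"] \<open>d \<ge> 0\<close> by simp
qed

lemma defect_on_spectral_bands_le:
  assumes red: "\<And>t x. x \<in> M \<Longrightarrow> proj (spectral_subspace h t) x \<in> M" and "d > 0"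
    and "z \<in> M" "z \<in> spectral_subspace h (a + real (Suc n) * d)" "z \<in> orth (spectral_subspace h a)"
  shows "norm (h z - proj M (h z)) \<le> d * norm z"
  using assms(3-)
proof (induction n arbitrary: z)
  case 0
  then show ?case using defect_on_spectral_band_le[of "a + real (Suc 0) * d" a d z] by simp
next
  case (Suc n)
  have top: "norm (h w - proj M (h w)) \<le> d * norm w"
    if "w \<in> M" "w \<in> spectral_subspace h (a + real (Suc (Suc n)) * d)"
      "w \<in> orth (spectral_subspace h (a + real (Suc n) * d))" for w
    by (rule defect_on_spectral_band_le[OF _ that]) (simp add: algebra_simps)
  show ?case
    by (rule defect_on_spectral_band_split[of a "a + real (Suc n) * d" "a + real (Suc (Suc n)) * d" d z,
          OF red _ _ _ Suc.IH top Suc.prems]) (use \<open>d > 0\<close> in simp_all)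
qed

theorem invariant_if_reduces_spectral_subspaces:
  assumes red: "\<And>t x. x \<in> M \<Longrightarrow> proj (spectral_subspace h t) x \<in> M" and y: "y \<in> M"
  shows "h y \<in> M"
proof -
  obtain K where K: "K > 0" "\<And>x. norm (h x) \<le> K * norm x"
    using bounded_clinear_pos_bound[OF selfadjoint_bounded_clinear[OF h]] by blast
  define a0 where "a0 = - K - 1"
  have "norm (h y - proj M (h y)) \<le> 0 + e" if "e > 0" for e
  proof -
    define d where "d = e / (norm y + 1)"
    have "d > 0" using that by (simp add: d_def add_nonneg_pos)
    obtain n where "2 * K + 1 < real n * d" using reals_Archimedean3[OF \<open>d > 0\<close>] by blast
    then have "spectral_subspace h (a0 + real (Suc n) * d) = UNIV"
      using \<open>d > 0\<close> by (intro spectral_subspace_above_bound[OF h K(2)]) (simp add: a0_def algebra_simps)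
    moreover have "spectral_subspace h a0 = {0}"
      by (rule spectral_subspace_below_bound[OF h K(2)]) (simp add: a0_def)
    \<comment> \<open>the bands of width \<open>d\<close> from \<open>a0\<close> cover the spectrum after \<open>n + 1\<close> steps\<close>
    ultimately have "norm (h y - proj M (h y)) \<le> d * norm y"
      using defect_on_spectral_bands_le[OF red \<open>d > 0\<close> y, of a0 n] by (simp add: orth_def)
    also have "\<dots> = e * (norm y / (norm y + 1))" by (simp add: d_def)
    also have "\<dots> \<le> e"
      by (rule mult_left_le) (use that in \<open>simp_all add: divide_le_eq_1 add_nonneg_pos\<close>)
    finally show ?thesis by simp
  qed
  then have "h y = proj M (h y)" using field_le_epsilon[of "norm (h y - proj M (h y))" 0] by simp
  then show ?thesis using proj_in[OF M, of "h y"] by simp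
qed

end

section \<open>Invariant subspaces of a self-adjoint set and of its commutant\<close>

definition star_closed :: "('a::chilbert_space \<Rightarrow> 'a) set \<Rightarrow> bool" where
  "star_closed S \<longleftrightarrow> S \<subseteq> BH \<and> (\<forall>T\<in>S. \<exists>T'\<in>S. is_adjoint T' T)"

lemma commutant_iff: "b \<in> commutant S \<longleftrightarrow> bounded_clinear b \<and> (\<forall>T\<in>S. \<forall>x. b (T x) = T (b x))"
  by (auto simp: commutant_def BH_def fun_eq_iff)

lemma Lat_iff: "M \<in> Lat S \<longleftrightarrow> closed_csubspace M \<and> (\<forall>T\<in>S. \<forall>x\<in>M. T x \<in> M)"
  by (auto simp: Lat_def)

lemma star_closedE:
  assumes "star_closed S" "T \<in> S"
  obtains T' where "T' \<in> S" "\<And>x y. cinner (T x) y = cinner x (T' y)"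
  using assms by (auto simp: star_closed_def is_adjoint_def)

lemma star_closed_bounded_clinear: "star_closed S \<Longrightarrow> T \<in> S \<Longrightarrow> bounded_clinear T"
  by (auto simp: star_closed_def BH_def)

lemma proj_Lat_in_commutant:
  assumes S: "star_closed S" and N: "N \<in> Lat S"
  shows "proj N \<in> commutant S"
proof -
  have N_closed: "closed_csubspace N" using N by (simp add: Lat_iff)
  have "proj N (T x) = T (proj N x)" if T: "T \<in> S" for T x
  proof -
    obtain T' where T': "T' \<in> S" "\<And>x y. cinner (T x) y = cinner x (T' y)"
      using star_closedE[OF S T] by blast
    show ?thesis
      by (rule proj_commute_reducing[where s' = T', OF N_closed
            bounded_clinear_clinear[OF star_closed_bounded_clinear[OF S T]] T'(2)])
        (use N T T'(1) in \<open>auto simp: Lat_iff\<close>)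
  qed
  then show ?thesis using bounded_clinear_proj[OF N_closed] by (auto simp: commutant_iff)
qed

lemma orth_in_Lat:
  assumes S: "star_closed S" and N: "N \<in> Lat S"
  shows "orth N \<in> Lat S"
proof -
  have "T y \<in> orth N" if T: "T \<in> S" and y: "y \<in> orth N" for T y
  proof -
    obtain T' where T': "T' \<in> S" "\<And>x y. cinner (T x) y = cinner x (T' y)" using star_closedE[OF S T] by blast
    have "cinner (T y) n = 0" if "n \<in> N" for n
    proof -
      have "T' n \<in> N" using N T'(1) that by (simp add: Lat_iff)
      then have "cinner (T' n) y = 0" using y by (simp add: orth_def)
      then show ?thesis by (simp add: T'(2) cinner_eq_0_commute)
    qed
    then show ?thesis by (simp add: orth_def cinner_eq_0_commute)
  qed
  then show ?thesis using closed_csubspace_orth by (simp add: Lat_iff)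
qed

lemma adjoint_in_commutant:
  assumes S: "star_closed S" and b: "b \<in> commutant S"
    and b': "bounded_clinear b'" "\<And>x y. cinner (b x) y = cinner x (b' y)"
  shows "b' \<in> commutant S"
proof -
  have "b' (T x) = T (b' x)" if T: "T \<in> S" for T x
  proof -
    obtain T' where T': "T' \<in> S" "\<And>x y. cinner (T x) y = cinner x (T' y)" using star_closedE[OF S T] by blast
    have T'_adj: "cinner u (T w) = cinner (T' u) w" for u w
      by (metis T'(2) cinner_conj_commute)
    have "b (T' z) = T' (b z)" for z using b T'(1) by (simp add: commutant_iff)
    then have "cinner z (b' (T x)) = cinner z (T (b' x))" for z
      by (simp add: b'(2)[symmetric] T'_adj)
    then show ?thesis by (rule cinner_ext)
  qed
  then show ?thesis using b'(1) by (simp add: commutant_iff)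
qed

lemma star_closed_commutant:
  assumes S: "star_closed S"
  shows "star_closed (commutant S)"
proof -
  have "\<exists>b'\<in>commutant S. is_adjoint b' b" if b: "b \<in> commutant S" for b
  proof -
    obtain b' where b': "bounded_clinear b'" "\<And>x y. cinner (b x) y = cinner x (b' y)"
      using adjoint_exists[of b] b by (auto simp: commutant_iff)
    then show ?thesis using adjoint_in_commutant[OF S b b'] by (auto simp: is_adjoint_def)
  qed
  then show ?thesis by (auto simp: star_closed_def commutant_def)
qed

lemma commutant_cartesian_decomposition:
  assumes S: "star_closed S" and b: "b \<in> commutant S"
  obtains h1 h2 where "selfadjoint h1" "h1 \<in> commutant S" "selfadjoint h2" "h2 \<in> commutant S"
    "\<And>x. b x = h1 x + \<i> *\<^sub>C h2 x"
proof -
  have b_bcl: "bounded_clinear b" using b by (simp add: commutant_iff)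
  obtain b' where b': "bounded_clinear b'" "\<And>x y. cinner (b x) y = cinner x (b' y)"
    using adjoint_exists[OF b_bcl] by blast
  have b'_comm: "b' \<in> commutant S" by (rule adjoint_in_commutant[OF S b b'])
  have b'_adj: "cinner (b' x) z = cinner x (b z)" for x z
    by (metis b'(2) cinner_conj_commute)
  have comm: "b (T x) = T (b x)" "b' (T x) = T (b' x)" "clinear T" if "T \<in> S" for T x
    using b b'_comm that bounded_clinear_clinear[OF star_closed_bounded_clinear[OF S that]]
    by (auto simp: commutant_iff)
  define h1 where "h1 = (\<lambda>x. (1/2 :: complex) *\<^sub>C (b x + b' x))"
  define h2 where "h2 = (\<lambda>x. (- \<i>/2) *\<^sub>C (b x - b' x))"
  show ?thesis
  proof
    show "selfadjoint h1"
      using bounded_clinear_scaleC[OF bounded_clinear_add[OF b_bcl b'(1)]]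
      by (simp add: selfadjoint_def h1_def cinner_scaleC_left cinner_scaleC_right cinner_add_left
          cinner_add_right b'(2) b'_adj)
    show "selfadjoint h2"
      using bounded_clinear_scaleC[OF bounded_clinear_diff[OF b_bcl b'(1)]]
      by (simp add: selfadjoint_def h2_def cinner_scaleC_left cinner_scaleC_right cinner_diff_left
          cinner_diff_right b'(2) b'_adj algebra_simps)
    show "h1 \<in> commutant S" "h2 \<in> commutant S"
      using comm selfadjoint_bounded_clinear[OF \<open>selfadjoint h1\<close>]
        selfadjoint_bounded_clinear[OF \<open>selfadjoint h2\<close>]
      by (auto simp: commutant_iff h1_def h2_def clinear_scaleC clinear_add clinear_diff)
    show "b x = h1 x + \<i> *\<^sub>C h2 x" for x
    proof -
      have "h1 x + \<i> *\<^sub>C h2 x = (1/2 :: complex) *\<^sub>C (b x + b' x) + (1/2 :: complex) *\<^sub>C (b x - b' x)"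
        by (simp add: h1_def h2_def scaleC_scaleC)
      also have "\<dots> = (1/2 :: complex) *\<^sub>C b x + (1/2 :: complex) *\<^sub>C b x"
        by (simp add: scaleC_add_right scaleC_diff_right)
      also have "\<dots> = ((1/2 :: complex) + 1/2) *\<^sub>C b x" by (rule scaleC_add_left[symmetric])
      finally show ?thesis by simp
    qed
  qed
qed

text \<open>This is stated in terms of
  \<open>Lat S\<close> alone, so it is preserved by every element of \<open>Col S\<close>.\<close>

definition splits_along_Lat :: "('a::chilbert_space \<Rightarrow> 'a) set \<Rightarrow> 'a set \<Rightarrow> bool" where
  "splits_along_Lat S M \<longleftrightarrow> (\<forall>N L. N \<in> Lat S \<longrightarrow> L \<in> Lat S \<longrightarrow> N \<inter> L \<subseteq> {0} \<longrightarrow>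
      (\<forall>x. \<exists>n\<in>N. \<exists>l\<in>L. x = n + l) \<longrightarrow> (\<forall>x\<in>M. \<exists>n\<in>M \<inter> N. \<exists>l\<in>M \<inter> L. x = n + l))"

lemma splits_along_LatD:
  assumes "splits_along_Lat S M" "N \<in> Lat S" "L \<in> Lat S" "N \<inter> L \<subseteq> {0}"
    "\<And>x. \<exists>n\<in>N. \<exists>l\<in>L. x = n + l" "x \<in> M"
  obtains n l where "n \<in> M \<inter> N" "l \<in> M \<inter> L" "x = n + l"
  using assms unfolding splits_along_Lat_def by blast

lemma Lat_commutant_splits:
  assumes S: "star_closed S" and M: "M \<in> Lat (commutant S)"
  shows "splits_along_Lat S M"
  unfolding splits_along_Lat_def
proof (intro allI impI ballI)
  fix N L x
  assume N: "N \<in> Lat S" and L: "L \<in> Lat S" and NL: "N \<inter> L \<subseteq> {0}"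
    and span: "\<forall>x. \<exists>n\<in>N. \<exists>l\<in>L. x = n + l" and x: "x \<in> M"
  have M_closed: "closed_csubspace M" using M by (simp add: Lat_iff)
  \<comment> \<open>\<open>proj N \<in> S'\<close> leaves \<open>M\<close> invariant, so \<open>proj M\<close> leaves every \<open>N \<in> Lat S\<close> invariant\<close>
  have proj_M: "proj M z \<in> K" if "K \<in> Lat S" "z \<in> K" for K z
    using proj_reducing_invariant(1)[OF M_closed _ _ that(2)] M proj_Lat_in_commutant[OF S that(1)] that(1)
    by (auto simp: Lat_iff)
  obtain n l where nl: "n \<in> N" "l \<in> L" "x = n + l" using span by blast
  have N_closed: "closed_csubspace N" and L_closed: "closed_csubspace L" using N L by (auto simp: Lat_iff)
  have "n - proj M n = proj M l - l"
    using nl(3) proj_id[OF M_closed x] proj_add[OF M_closed, of n l] by (simp add: algebra_simps)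
  moreover have "n - proj M n \<in> N" using closed_csubspace_diff[OF N_closed nl(1) proj_M[OF N nl(1)]] .
  moreover have "proj M l - l \<in> L" using closed_csubspace_diff[OF L_closed proj_M[OF L nl(2)] nl(2)] .
  ultimately have "proj M n = n" using NL by auto
  then have "n \<in> M" using proj_eq_self_iff[OF M_closed] by blast
  moreover have "l \<in> M" using closed_csubspace_diff[OF M_closed x \<open>n \<in> M\<close>] nl(3) by simp
  ultimately show "\<exists>n\<in>M \<inter> N. \<exists>l\<in>M \<inter> L. x = n + l" using nl by blast
qed

lemma splits_proj_Lat_invariant:
  assumes S: "star_closed S" and M: "splits_along_Lat S M" and N: "N \<in> Lat S" and x: "x \<in> M"
  shows "proj N x \<in> M"
proof -
  have N_closed: "closed_csubspace N" using N by (simp add: Lat_iff)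
  have "\<exists>n\<in>N. \<exists>l\<in>orth N. z = n + l" for z
    by (intro bexI[of _ "proj N z"] bexI[of _ "z - proj N z"])
      (simp_all add: proj_in[OF N_closed] proj_residual_orth[OF N_closed])
  moreover have "N \<inter> orth N \<subseteq> {0}" using orth_Int by blast
  ultimately obtain n l where nl: "n \<in> M \<inter> N" "l \<in> M \<inter> orth N" "x = n + l"
    using splits_along_LatD[OF M N orth_in_Lat[OF S N] _ _ x] by blast
  have "proj N x = n"
    using nl by (intro proj_eqI[OF N_closed]) (auto simp: orth_def)
  then show ?thesis using nl by simp
qed

lemma spectral_subspace_in_Lat:
  assumes S: "star_closed S" and h: "selfadjoint h" "h \<in> commutant S"
  shows "spectral_subspace h t \<in> Lat S"
proof -
  have "T x \<in> spectral_subspace h t" if "T \<in> S" "x \<in> spectral_subspace h t" for T x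
    by (rule spectral_subspace_invariant[OF h(1) star_closed_bounded_clinear[OF S that(1)] _ that(2)])
      (use h(2) that(1) in \<open>simp add: commutant_iff\<close>)
  then show ?thesis by (simp add: Lat_iff closed_csubspace_spectral_subspace[OF h(1)])
qed

lemma splits_Lat_commutant:
  assumes S: "star_closed S" and M_closed: "closed_csubspace M" and M: "splits_along_Lat S M"
  shows "M \<in> Lat (commutant S)"
proof -
  have selfadjoint_inv: "h y \<in> M" if "selfadjoint h" "h \<in> commutant S" "y \<in> M" for h y
    using invariant_if_reduces_spectral_subspaces[OF that(1) M_closed _ that(3)]
      splits_proj_Lat_invariant[OF S M spectral_subspace_in_Lat[OF S that(1,2)]] by blast
  have "b y \<in> M" if b: "b \<in> commutant S" and y: "y \<in> M" for b y
  proof -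
    obtain h1 h2 where "selfadjoint h1" "h1 \<in> commutant S" "selfadjoint h2" "h2 \<in> commutant S"
      and "b y = h1 y + \<i> *\<^sub>C h2 y"
      using commutant_cartesian_decomposition[OF S b] by blast
    then show ?thesis
      using selfadjoint_inv y closed_csubspace_add[OF M_closed] closed_csubspace_scaleC[OF M_closed]
      by simp
  qed
  then show ?thesis using M_closed by (simp add: Lat_iff)
qed

lemma Lat_commutant_iff_splits:
  "star_closed S \<Longrightarrow> closed_csubspace M \<Longrightarrow> M \<in> Lat (commutant S) \<longleftrightarrow> splits_along_Lat S M"
  using Lat_commutant_splits splits_Lat_commutant by blast

section \<open>Invertible operators preserving invariant subspaces\<close>

lemma invertible_opE:
  assumes "invertible_op T"
  obtains U where "bounded_clinear T" "bounded_clinear U" "\<And>x. U (T x) = x" "\<And>x. T (U x) = x"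
proof -
  obtain U where "T \<in> BH" "U \<in> BH" "U \<circ> T = id" "T \<circ> U = id"
    using assms by (auto simp: invertible_op_def)
  then show thesis
    using that[of U] pointfree_idE[of U T] pointfree_idE[of T U] by (simp add: BH_def)
qed

lemma closed_csubspace_image_invertible:
  assumes T: "bounded_clinear T" and U: "bounded_clinear U" and UT: "\<And>x. U (T x) = x"
    and TU: "\<And>x. T (U x) = x" and M: "closed_csubspace M"
  shows "closed_csubspace (T ` M)"
proof -
  have "T ` M = U -` M"
  proof
    show "T ` M \<subseteq> U -` M" using UT by auto
    show "U -` M \<subseteq> T ` M"
    proof
      fix x assume "x \<in> U -` M"
      then show "x \<in> T ` M" using image_eqI[of x T "U x", OF TU[of x, symmetric]] by simp
    qed
  qed
  moreover have "closed (U -` M)"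
    using continuous_closed_vimage[OF closed_csubspace_closed[OF M]]
      linear_continuous_at[OF bounded_clinear_bounded_linear[OF U]] by blast
  moreover have "U -` M = {x. U x \<in> M}" by auto
  ultimately show ?thesis
    using M bounded_clinear_clinear[OF U]
    by (auto simp: closed_csubspace_def clinear_add clinear_scaleC clinear_zero)
qed

lemma Col_image_Lat:
  assumes "T \<in> Col S" "N \<in> Lat S"
  shows "T ` N \<in> Lat S"
proof -
  have "closed_csubspace N" using assms(2) by (simp add: Lat_iff)
  then show ?thesis using assms unfolding Col_def by blast
qed

lemma Col_inverse:
  assumes TC: "T \<in> Col S" and T: "bounded_clinear T" and U: "bounded_clinear U"
    and UT: "\<And>x. U (T x) = x" and TU: "\<And>x. T (U x) = x"
  shows "U \<in> Col S"
proof -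
  have "invertible_op U"
    unfolding invertible_op_def using T U UT TU by (auto simp: BH_def fun_eq_iff)
  moreover have "M \<in> Lat S \<longleftrightarrow> U ` M \<in> Lat S" if M: "closed_csubspace M" for M
  proof -
    have "U ` M \<in> Lat S \<longleftrightarrow> T ` U ` M \<in> Lat S"
      using TC closed_csubspace_image_invertible[OF U T TU UT M] by (simp add: Col_def)
    moreover have "T ` U ` M = M" using TU by (simp add: image_image)
    ultimately show ?thesis by simp
  qed
  ultimately show ?thesis by (simp add: Col_def)
qed

lemma splits_along_Lat_image:
  assumes TC: "T \<in> Col S" and M: "splits_along_Lat S M"
  shows "splits_along_Lat S (T ` M)"
  unfolding splits_along_Lat_def
proof (intro allI impI ballI)
  obtain U where T: "bounded_clinear T" and U: "bounded_clinear U" and UT: "\<And>x. U (T x) = x"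
    and TU: "\<And>x. T (U x) = x" using TC invertible_opE by (auto simp: Col_def)
  have UC: "U \<in> Col S" by (rule Col_inverse[OF TC T U UT TU])
  have U_lin: "clinear U" by (rule bounded_clinear_clinear[OF U])
  fix N L y
  assume N: "N \<in> Lat S" and L: "L \<in> Lat S" and NL: "N \<inter> L \<subseteq> {0}"
    and span: "\<forall>x. \<exists>n\<in>N. \<exists>l\<in>L. x = n + l" and y: "y \<in> T ` M"
  \<comment> \<open>pull the complementary pair \<open>N, L\<close> back by \<open>U = T\<^sup>-\<^sup>1\<close>, split there and push forward by \<open>T\<close>\<close>
  have TU_image: "T ` U ` K = K" for K using TU by (simp add: image_image)
  have "U ` N \<inter> U ` L \<subseteq> {0}"
  proof
    fix z assume "z \<in> U ` N \<inter> U ` L"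
    then have "T z \<in> N \<inter> L" using TU_image by blast
    then have "T z = 0" using NL by blast
    then show "z \<in> {0}" using UT[of z] clinear_zero[OF U_lin] by simp
  qed
  moreover have "\<exists>n\<in>U ` N. \<exists>l\<in>U ` L. x = n + l" for x
  proof -
    obtain n l where "n \<in> N" "l \<in> L" "T x = n + l" using span by blast
    moreover have "x = U (T x)" by (simp add: UT)
    ultimately have "x = U n + U l" by (simp add: clinear_add[OF U_lin])
    then show ?thesis using \<open>n \<in> N\<close> \<open>l \<in> L\<close> by blast
  qed
  moreover obtain x where x: "x \<in> M" "y = T x" using y by blast
  ultimately obtain n l where nl: "n \<in> M \<inter> U ` N" "l \<in> M \<inter> U ` L" "x = n + l"
    using splits_along_LatD[OF M Col_image_Lat[OF UC N] Col_image_Lat[OF UC L]] by blast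
  have "y = T n + T l" using x(2) nl(3) clinear_add[OF bounded_clinear_clinear[OF T]] by simp
  moreover have "T n \<in> T ` M \<inter> N" "T l \<in> T ` M \<inter> L"
    using nl TU_image[of N] TU_image[of L] by blast+
  ultimately show "\<exists>n\<in>T ` M \<inter> N. \<exists>l\<in>T ` M \<inter> L. y = n + l" by blast
qed

lemma Col_subset_Col_commutant:
  assumes S: "star_closed S"
  shows "Col S \<subseteq> Col (commutant S)"
proof
  fix T assume TC: "T \<in> Col S"
  obtain U where T: "bounded_clinear T" and U: "bounded_clinear U" and UT: "\<And>x. U (T x) = x"
    and TU: "\<And>x. T (U x) = x" using TC invertible_opE by (auto simp: Col_def)
  have "M \<in> Lat (commutant S) \<longleftrightarrow> T ` M \<in> Lat (commutant S)" if M: "closed_csubspace M" for M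
  proof -
    have "U ` T ` M = M" using UT by (simp add: image_image)
    then have "splits_along_Lat S (T ` M) \<Longrightarrow> splits_along_Lat S M"
      using splits_along_Lat_image[OF Col_inverse[OF TC T U UT TU], of "T ` M"] by simp
    then show ?thesis
      using splits_along_Lat_image[OF TC] Lat_commutant_iff_splits[OF S M]
        Lat_commutant_iff_splits[OF S closed_csubspace_image_invertible[OF T U UT TU M]] by blast
  qed
  then show "T \<in> Col (commutant S)" using TC by (simp add: Col_def)
qed

lemma Lat_bicommutant:
  assumes S: "star_closed S"
  shows "Lat (commutant (commutant S)) = Lat S"
proof
  have "S \<subseteq> commutant (commutant S)"
    using star_closed_bounded_clinear[OF S] by (auto simp: commutant_iff)
  then show "Lat (commutant (commutant S)) \<subseteq> Lat S" by (auto simp: Lat_def)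
next
  show "Lat S \<subseteq> Lat (commutant (commutant S))"
  proof
    fix M assume M: "M \<in> Lat S"
    have M_closed: "closed_csubspace M" using M by (simp add: Lat_iff)
    have "b x \<in> M" if "b \<in> commutant (commutant S)" "x \<in> M" for b x
    proof -
      have "b x = b (proj M x)" using proj_id[OF M_closed \<open>x \<in> M\<close>] by simp
      also have "\<dots> = proj M (b x)"
        using that(1) proj_Lat_in_commutant[OF S M] by (simp add: commutant_iff)
      finally show ?thesis using proj_in[OF M_closed, of "b x"] by simp
    qed
    then show "M \<in> Lat (commutant (commutant S))" using M_closed by (simp add: Lat_iff)
  qed
qed

theorem corollary3p12:
  fixes A :: "('a::chilbert_space \<Rightarrow> 'a) set"
  assumes "von_neumann_algebra A"
  shows "Col A = Col (commutant A)"
proof -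
  have S: "star_closed A" using assms by (simp add: von_neumann_algebra_def star_closed_def)
  have "Col A \<subseteq> Col (commutant A)" by (rule Col_subset_Col_commutant[OF S])
  moreover have "Col (commutant A) \<subseteq> Col (commutant (commutant A))"
    by (rule Col_subset_Col_commutant[OF star_closed_commutant[OF S]])
  moreover have "Col (commutant (commutant A)) = Col A"
    by (simp add: Col_def Lat_bicommutant[OF S])
  ultimately show ?thesis by blast
qed

end
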